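(* For every cache size $k\ge1$, the algorithm Mark&Predict (described in the context) is a randomized $(2,H_k,1)$-competitive algorithm for the phase-predictions setup, where $H_k=\sum_{j=1}^k 1/j$. That is, there is a constant $b$ (possibly depending on $k$) such that for every request sequence $I$ and every prediction vector $p$, $\mathbb{E}[\mathrm{ALG}(I,p)]\le 2\,\mathrm{OPT}(I)+H_k\,\eta_0(p,p^* )+\eta_1(p,p^* )+b$.
   Context: Paging: there is a universe $U$ of pages and a cache holding at most $k$ pages, initially empty. Requests $r_1,\dots,r_n\in U$ arrive online. If the requested page is not in the cache (a page fault), it must be loaded into the cache, evicting some cached page if the cache already holds $k$ pages. The cost of an algorithm is its number of page faults; $\mathrm{OPT}(I)$ is the minimum cost of an offline algorithm on request sequence $I$. Along with each request $r_i$ the online algorithm receives a prediction bit $p_i\in\{0,1\}$ (which may be arbitrary). A page whose most recent prediction is $0$ (resp. $1$) is called a $0$-page (resp. $1$-page). An algorithm is $(\alpha,\beta,\gamma)$-competitive if there is a constant $b$ (possibly depending on $k$) such that for every instance $I$ and all predictions $p$, $\mathrm{ALG}(I,p)\le \alpha\,\mathrm{OPT}(I)+\beta\,\eta_0+\gamma\,\eta_1+b$ (for randomized algorithms, $\mathrm{ALG}(I,p)$ is the expected cost). Phase-predictions setup: partition the request sequence into $k$-phases: the first starts at $r_1$, each phase is a maximal contiguous segment containing at most $k$ distinct pages, and each subsequent phase starts right after the previous one ends. For a request $r_i$ in phase $j$, the ground truth is $p_i^*=0$ if page $r_i$ is requested in phase $j+1$ and $p_i^*=1$ otherwise. The errors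 are $\eta_h$ ($h\in\{0,1\}$) = number of counted requests $i$ with $p_i=h$ and $p_i^*=1-h$, where the counted requests are, for each phase $j$ other than the last phase and each page requested in phase $j$, only the last request to that page within phase $j$ (predictions in the last phase are not counted). Algorithm Mark&Predict: pages carry a mark. On request $r_i$: if $r_i$ is not in the cache and the cache is full, then (i) if all cached pages are marked, unmark all pages (start of a new phase); (ii) if there is an unmarked $1$-page in the cache, evict one chosen uniformly at random among unmarked $1$-pages, otherwise evict an unmarked $0$-page chosen uniformly at random; then load $r_i$. Finally (in all cases) mark $r_i$. *)

theory Defs
  imports "HOL-Probability.Probability_Mass_Function"
begin

text \<open>Prediction bits are booleans: True = 1, False = 0.
  Requests are a list I of pages (type 'a is the universe U); predictions a bool list p
  with length p = length I.\<close>

text \<open>A valid (offline) schedule: Cs ! i is the cache content before request i,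
  Cs ! 0 = {} and each step follows the paging rules (hit: unchanged; fault with
  non-full cache: load; fault with full cache: evict some cached page, then load).\<close>

definition paging_step :: "nat \<Rightarrow> 'a set \<Rightarrow> 'a \<Rightarrow> 'a set \<Rightarrow> bool" where
  "paging_step k C r C' =
     (if r \<in> C then C' = C
      else if card C < k then C' = insert r C
      else (\<exists>q\<in>C. C' = insert r (C - {q})))"

definition valid_schedule :: "nat \<Rightarrow> 'a list \<Rightarrow> 'a set list \<Rightarrow> bool" where
  "valid_schedule k I Cs =
     (length Cs = length I + 1 \<and> Cs ! 0 = {} \<and>
      (\<forall>i < length I. paging_step k (Cs ! i) (I ! i) (Cs ! Suc i)))"

definition schedule_cost :: "'a list \<Rightarrow> 'a set list \<Rightarrow> nat" where
  "schedule_cost I Cs = card {i. i < length I \<and> I ! i \<notin> Cs ! i}"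

definition OPT :: "nat \<Rightarrow> 'a list \<Rightarrow> nat" where
  "OPT k I = (LEAST c. \<exists>Cs. valid_schedule k I Cs \<and> schedule_cost I Cs = c)"

text \<open>State: (cache, marked pages, most recent prediction of each page).\<close>

type_synonym 'a mp_state = "'a set \<times> 'a set \<times> ('a \<Rightarrow> bool)"

definition mp_step :: "nat \<Rightarrow> 'a mp_state \<Rightarrow> 'a \<times> bool \<Rightarrow> ('a mp_state \<times> nat) pmf" where
  "mp_step k s x = (case s of (C, M, P) \<Rightarrow> case x of (r, b) \<Rightarrow>
     (let P' = P(r := b) in
      if r \<in> C then return_pmf ((C, insert r M, P'), 0)
      else if card C < k then return_pmf ((insert r C, insert r M, P'), 1)
      else
        (let M0 = (if C \<subseteq> M then {} else M);
             U = C - M0;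
             U1 = {q \<in> U. P' q};
             cand = (if U1 \<noteq> {} then U1 else U)
         in map_pmf (\<lambda>q. ((insert r (C - {q}), insert r M0, P'), 1)) (pmf_of_set cand))))"

fun mp_run :: "nat \<Rightarrow> 'a mp_state \<Rightarrow> ('a \<times> bool) list \<Rightarrow> nat pmf" where
  "mp_run k s [] = return_pmf 0"
| "mp_run k s (x # xs) =
     bind_pmf (mp_step k s x) (\<lambda>(s', c). map_pmf (\<lambda>n. c + n) (mp_run k s' xs))"

definition mp_cost :: "nat \<Rightarrow> 'a list \<Rightarrow> bool list \<Rightarrow> real" where
  "mp_cost k I p = measure_pmf.expectation (mp_run k ({}, {}, (\<lambda>_. False)) (zip I p)) real"

text \<open>phase_aux computes the phase index of every position: greedy maximal
  segments with at most k distinct pages.\<close>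

fun phase_aux :: "nat \<Rightarrow> 'a set \<Rightarrow> nat \<Rightarrow> 'a list \<Rightarrow> nat list" where
  "phase_aux k D j [] = []"
| "phase_aux k D j (r # rs) =
     (if r \<in> D \<or> card D < k then j # phase_aux k (insert r D) j rs
      else Suc j # phase_aux k {r} (Suc j) rs)"

definition phase :: "nat \<Rightarrow> 'a list \<Rightarrow> nat \<Rightarrow> nat" where
  "phase k I i = phase_aux k {} 0 I ! i"

definition pstar :: "nat \<Rightarrow> 'a list \<Rightarrow> nat \<Rightarrow> bool" where
  "pstar k I i = (\<not> (\<exists>i'<length I. phase k I i' = Suc (phase k I i) \<and> I ! i' = I ! i))"

definition counted :: "nat \<Rightarrow> 'a list \<Rightarrow> nat \<Rightarrow> bool" where
  "counted k I i = (i < length I \<and> phase k I i < phase k I (length I - 1) \<and>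
     \<not> (\<exists>i'. i < i' \<and> i' < length I \<and> phase k I i' = phase k I i \<and> I ! i' = I ! i))"

definition eta :: "nat \<Rightarrow> 'a list \<Rightarrow> bool list \<Rightarrow> bool \<Rightarrow> nat" where
  "eta k I p h = card {i. counted k I i \<and> p ! i = h \<and> pstar k I i = (\<not> h)}"

end

theory Submission
  imports Defs "HOL-Analysis.Harmonic_Numbers"
begin

(* Whatever the random choices, the marked pages, the k-phases and the latest predictions evolve
   deterministically; the state of Mark&Predict differs from this skeleton only in which stale pages
   (pages of the previous phase not yet requested in the current one) are evicted.  As 1-pages are
   evicted first and 0-pages uniformly at random, the evicted stale pages are some stale 1-pages
   together with a uniformly random h-subset of the stale 0-pages, so the expected future cost is an
   average over h-subsets.  By backward induction over the request sequence this average is bounded by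
   a potential: the number of future requests to new pages, the future eta_1 errors plus H_k times the
   future eta_0 errors, and the errors of the previous phase not yet paid for -- stale 1-pages that
   will still be requested, and, weighted by H_u for u stale 0-pages, stale 0-pages that will not.
   Finally, OPT faults in every two consecutive phases at least as often as there are new pages in the
   second one, so there are at most k + 2 OPT requests to new pages. *)

section \<open>Expected cost of Mark\&Predict\<close>

lemma mp_step_cost_le_1: "(s', c) \<in> set_pmf (mp_step k s x) \<Longrightarrow> c \<le> 1"
  unfolding mp_step_def by (auto simp: Let_def split: prod.splits if_splits)

lemma set_pmf_mp_run_subset: "set_pmf (mp_run k s xs) \<subseteq> {..length xs}"
proof (induction xs arbitrary: s)
  case (Cons x xs)
  then show ?case using mp_step_cost_le_1[of _ _ k s x] by (fastforce split: prod.splits)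
qed simp

lemma mp_run_le_length: "n \<in> set_pmf (mp_run k s xs) \<Longrightarrow> n \<le> length xs"
  using set_pmf_mp_run_subset by fastforce

definition exp_cost :: "nat \<Rightarrow> 'a mp_state \<Rightarrow> ('a \<times> bool) list \<Rightarrow> real" where
  "exp_cost k s xs = measure_pmf.expectation (mp_run k s xs) real"

lemma exp_cost_Nil: "exp_cost k s [] = 0"
  unfolding exp_cost_def by simp

lemma exp_cost_nonneg: "0 \<le> exp_cost k s xs"
  unfolding exp_cost_def by simp

lemma integrable_mp_run: "integrable (measure_pmf (mp_run k s xs)) real"
proof (intro measure_pmf.integrable_const_bound[where B="length xs"] AE_pmfI)
  fix n assume "n \<in> set_pmf (mp_run k s xs)"
  then show "norm (real n) \<le> real (length xs)" using mp_run_le_length by simp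
qed simp

lemma exp_cost_le_length: "exp_cost k s xs \<le> length xs"
  unfolding exp_cost_def
proof (rule measure_pmf.integral_le_const)
  show "AE n in measure_pmf (mp_run k s xs). real n \<le> real (length xs)"
    using mp_run_le_length by (intro AE_pmfI) simp
  show "integrable (measure_pmf (mp_run k s xs)) real"
    by (rule integrable_mp_run)
qed

lemma nn_integral_pmf_eq_expectation:
  fixes f :: "'b \<Rightarrow> real"
  assumes "\<And>x. x \<in> set_pmf M \<Longrightarrow> 0 \<le> f x \<and> f x \<le> B"
  shows "(\<integral>\<^sup>+x. ennreal (f x) \<partial>measure_pmf M) = ennreal (measure_pmf.expectation M f)"
proof (rule nn_integral_eq_integral)
  show "integrable (measure_pmf M) f"
    using assms by (intro measure_pmf.integrable_const_bound[where B=B] AE_pmfI) auto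
  show "AE x in measure_pmf M. 0 \<le> f x" using assms by (intro AE_pmfI) auto
qed

text \<open>Costs are unbounded on \<open>nat\<close>, so the expectation of the bind is computed through the
  nonnegative integral, for which Fubini holds unconditionally.\<close>

lemma exp_cost_Cons:
  "exp_cost k s (x # xs) = measure_pmf.expectation (mp_step k s x) (\<lambda>(s', c). real c + exp_cost k s' xs)"
proof -
  have shift: "(\<integral>\<^sup>+n. ennreal (real n) \<partial>measure_pmf (map_pmf ((+) c) (mp_run k s' xs)))
      = ennreal (real c + exp_cost k s' xs)" for s' c
  proof -
    have "(\<integral>\<^sup>+n. ennreal (real n) \<partial>measure_pmf (map_pmf ((+) c) (mp_run k s' xs)))
        = (\<integral>\<^sup>+n. ennreal (real c + real n) \<partial>measure_pmf (mp_run k s' xs))"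
      by simp
    also have "\<dots> = ennreal (measure_pmf.expectation (mp_run k s' xs) (\<lambda>n. real c + real n))"
      by (rule nn_integral_pmf_eq_expectation[where B="c + length xs"]) (auto dest!: mp_run_le_length)
    also have "\<dots> = ennreal (real c + exp_cost k s' xs)"
      unfolding exp_cost_def by (subst Bochner_Integration.integral_add) (simp_all add: integrable_mp_run)
    finally show ?thesis .
  qed
  have "ennreal (exp_cost k s (x # xs)) = (\<integral>\<^sup>+n. ennreal (real n) \<partial>measure_pmf (mp_run k s (x # xs)))"
    unfolding exp_cost_def
  proof (rule nn_integral_pmf_eq_expectation[symmetric, where B="length (x # xs)"])
    fix n assume "n \<in> set_pmf (mp_run k s (x # xs))"
    from mp_run_le_length[OF this] show "0 \<le> real n \<and> real n \<le> real (length (x # xs))" by simp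
  qed
  also have "\<dots> = (\<integral>\<^sup>+z. (\<integral>\<^sup>+n. ennreal (real n)
      \<partial>measure_pmf (case z of (s', c) \<Rightarrow> map_pmf ((+) c) (mp_run k s' xs))) \<partial>measure_pmf (mp_step k s x))"
    by simp
  also have "\<dots> = (\<integral>\<^sup>+z. ennreal ((\<lambda>(s', c). real c + exp_cost k s' xs) z) \<partial>measure_pmf (mp_step k s x))"
    by (rule nn_integral_cong) (auto split: prod.splits simp: shift[simplified])
  also have "\<dots> = ennreal (measure_pmf.expectation (mp_step k s x) (\<lambda>(s', c). real c + exp_cost k s' xs))"
  proof (rule nn_integral_pmf_eq_expectation[where B="1 + length xs"], clarsimp)
    fix s' c assume "(s', c) \<in> set_pmf (mp_step k s x)"
    then show "0 \<le> real c + exp_cost k s' xs \<and> real c + exp_cost k s' xs \<le> 1 + real (length xs)"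
      using mp_step_cost_le_1 exp_cost_nonneg[of k s' xs] exp_cost_le_length[of k s' xs] by fastforce
  qed
  finally show ?thesis
    by (subst (asm) ennreal_inj) (auto simp: exp_cost_nonneg intro!: Bochner_Integration.integral_nonneg)
qed

lemma exp_cost_hit:
  "r \<in> C \<Longrightarrow> exp_cost k (C, M, P) ((r, b) # xs) = exp_cost k (C, insert r M, P(r := b)) xs"
  by (simp add: exp_cost_Cons mp_step_def)

lemma exp_cost_load:
  "r \<notin> C \<Longrightarrow> card C < k \<Longrightarrow>
    exp_cost k (C, M, P) ((r, b) # xs) = 1 + exp_cost k (insert r C, insert r M, P(r := b)) xs"
  by (simp add: exp_cost_Cons mp_step_def)

definition average :: "('b \<Rightarrow> real) \<Rightarrow> 'b set \<Rightarrow> real" where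
  "average f A = sum f A / real (card A)"

definition evict_candidates :: "'a set \<Rightarrow> ('a \<Rightarrow> bool) \<Rightarrow> 'a set" where
  "evict_candidates U P = (if {q \<in> U. P q} \<noteq> {} then {q \<in> U. P q} else U)"

lemma exp_cost_evict:
  assumes "r \<notin> C" "finite C" "\<not> card C < k" "M0 = (if C \<subseteq> M then {} else M)" "C - M0 \<noteq> {}"
  shows "exp_cost k (C, M, P) ((r, b) # xs) =
    1 + average (\<lambda>q. exp_cost k (insert r (C - {q}), insert r M0, P(r := b)) xs)
                (evict_candidates (C - M0) (P(r := b)))"
proof -
  define U where "U = evict_candidates (C - M0) (P(r := b))"
  have U: "U \<noteq> {}" "finite U" using assms(2,5) unfolding U_def evict_candidates_def by auto
  have "mp_step k (C, M, P) (r, b) =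
      map_pmf (\<lambda>q. ((insert r (C - {q}), insert r M0, P(r := b)), 1)) (pmf_of_set U)"
  proof (cases "C \<subseteq> M")
    case True
    then show ?thesis
      using assms(1,3) unfolding assms(4) mp_step_def U_def evict_candidates_def by (simp add: Let_def) blast
  next
    case False
    then show ?thesis
      using assms(1,3) unfolding assms(4) mp_step_def U_def evict_candidates_def by (simp add: Let_def) blast
  qed
  then have "exp_cost k (C, M, P) ((r, b) # xs) =
      (\<Sum>q\<in>U. 1 + exp_cost k (insert r (C - {q}), insert r M0, P(r := b)) xs) / card U"
    using U by (simp add: exp_cost_Cons integral_pmf_of_set)
  then show ?thesis
    using U unfolding U_def[symmetric] average_def by (simp add: sum.distrib add_divide_distrib)
qed

section \<open>Averages over uniformly random subsets\<close>

lemma average_le: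
  assumes "finite A" "\<And>x. x \<in> A \<Longrightarrow> f x \<le> B" "0 \<le> B"
  shows "average f A \<le> B"
proof (cases "A = {}")
  case False
  then have "sum f A \<le> real (card A) * B" using sum_mono[OF assms(2)] by simp
  then show ?thesis using False assms(1) by (simp add: average_def divide_le_eq mult.commute)
qed (use assms in \<open>simp add: average_def\<close>)

lemma average_cong: "A = B \<Longrightarrow> (\<And>x. x \<in> B \<Longrightarrow> f x = g x) \<Longrightarrow> average f A = average g B"
  unfolding average_def by simp

lemma average_add_const:
  assumes "finite A" "A \<noteq> {}"
  shows "average (\<lambda>x. c + f x) A = c + average f A"
  using assms by (simp add: average_def sum.distrib add_divide_distrib)

definition ksubsets :: "'a set \<Rightarrow> nat \<Rightarrow> 'a set set" where
  "ksubsets Z h = {S. S \<subseteq> Z \<and> card S = h}"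

lemma card_ksubsets: "finite Z \<Longrightarrow> card (ksubsets Z h) = card Z choose h"
  unfolding ksubsets_def by (rule n_subsets)

lemma finite_ksubsets: "finite Z \<Longrightarrow> finite (ksubsets Z h)"
  unfolding ksubsets_def by (auto intro: finite_subset[of _ "Pow Z"])

lemma ksubsetsD:
  assumes "finite Z" "S \<in> ksubsets Z h"
  shows "S \<subseteq> Z" "finite S" "card S = h" "card (Z - S) = card Z - h"
proof -
  show "S \<subseteq> Z" "card S = h" using assms(2) by (auto simp: ksubsets_def)
  then show "finite S" "card (Z - S) = card Z - h"
    using assms(1) finite_subset by (blast, simp add: card_Diff_subset finite_subset)
qed

lemma ksubsets_0: "finite Z \<Longrightarrow> ksubsets Z 0 = {{}}"
  unfolding ksubsets_def by (auto simp: card_eq_0_iff dest: finite_subset)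

lemma average_ksubsets_1: "finite Z \<Longrightarrow> average f (ksubsets Z 1) = average (\<lambda>x. f {x}) Z"
proof -
  have "ksubsets Z 1 = (\<lambda>x. {x}) ` Z" unfolding ksubsets_def by (auto simp: card_Suc_eq)
  moreover have "inj_on (\<lambda>x. {x}) Z" by (auto intro: inj_onI)
  ultimately show ?thesis by (simp add: average_def sum.reindex card_image)
qed

lemma sum_ksubsets_insert:
  assumes "finite Z"
  shows "(\<Sum>S\<in>ksubsets Z h. \<Sum>x\<in>Z - S. f (insert x S)) = real (Suc h) * (\<Sum>S\<in>ksubsets Z (Suc h). f S)"
proof -
  have fin: "finite S" if "S \<in> ksubsets Z h'" for S h' using ksubsetsD[OF assms that] by simp
  have finS: "S \<subseteq> Z \<Longrightarrow> finite S" for S using assms finite_subset by blast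
  have "(\<Sum>S\<in>ksubsets Z h. \<Sum>x\<in>Z - S. f (insert x S)) = (\<Sum>(S, x)\<in>Sigma (ksubsets Z h) (\<lambda>S. Z - S). f (insert x S))"
    by (rule sum.Sigma) (use assms finite_ksubsets in auto)
  also have "\<dots> = (\<Sum>(S, x)\<in>Sigma (ksubsets Z (Suc h)) (\<lambda>S. S). f S)"
    by (rule sum.reindex_bij_witness[where i="\<lambda>(S, x). (S - {x}, x)" and j="\<lambda>(S, x). (insert x S, x)"])
      (auto simp: ksubsets_def card_insert_if finS)
  also have "\<dots> = (\<Sum>S\<in>ksubsets Z (Suc h). \<Sum>x\<in>S. f S)"
    by (rule sum.Sigma[symmetric]) (use assms finite_ksubsets fin in auto)
  also have "\<dots> = (\<Sum>S\<in>ksubsets Z (Suc h). real (Suc h) * f S)"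
    by (rule sum.cong) (auto simp: ksubsets_def)
  finally show ?thesis by (simp add: sum_distrib_left)
qed

lemma sum_ksubsets_exchange:
  assumes "finite Z" "r \<in> Z"
  shows "(\<Sum>S\<in>{S\<in>ksubsets Z h. r \<in> S}. \<Sum>x\<in>Z - S. g (insert x (S - {r})))
    = real h * (\<Sum>S\<in>ksubsets (Z - {r}) h. g S)"
proof -
  have fin: "finite S" if "S \<in> ksubsets Z' h'" "Z' \<subseteq> Z" for S Z' h'
    using that assms(1) by (auto simp: ksubsets_def intro: finite_subset)
  have finS: "S \<subseteq> Z \<Longrightarrow> finite S" "S \<subseteq> Z - {r} \<Longrightarrow> finite S" for S
    using assms finite_subset by blast+
  have card1: "card (insert x (S - {r})) = card S" if "r \<in> S" "x \<notin> S" "S \<subseteq> Z" for x S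
    using finS(1)[OF that(3)] that card_Suc_Diff1 by (metis Diff_iff card_insert_disjoint finite_Diff)
  have card2: "card (insert r (S - {x})) = card S" if "x \<in> S" "S \<subseteq> Z - {r}" for x S
    using finS(2)[OF that(2)] that card_Suc_Diff1 by (metis Diff_iff card_insert_disjoint finite_Diff insertI1 subsetD)
  have "(\<Sum>S\<in>{S\<in>ksubsets Z h. r \<in> S}. \<Sum>x\<in>Z - S. g (insert x (S - {r})))
      = (\<Sum>(S, x)\<in>Sigma {S\<in>ksubsets Z h. r \<in> S} (\<lambda>S. Z - S). g (insert x (S - {r})))"
    by (rule sum.Sigma) (use assms finite_ksubsets[OF assms(1), of h] in auto)
  also have "\<dots> = (\<Sum>(S, x)\<in>Sigma (ksubsets (Z - {r}) h) (\<lambda>S. S). g S)"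
    by (rule sum.reindex_bij_witness[where i="\<lambda>(S, x). (insert r (S - {x}), x)"
          and j="\<lambda>(S, x). (insert x (S - {r}), x)"])
      (use assms in \<open>auto simp: ksubsets_def card1 card2\<close>)
  also have "\<dots> = (\<Sum>S\<in>ksubsets (Z - {r}) h. \<Sum>x\<in>S. g S)"
    by (rule sum.Sigma[symmetric]) (use assms finite_ksubsets[of "Z - {r}" h] fin in auto)
  also have "\<dots> = (\<Sum>S\<in>ksubsets (Z - {r}) h. real h * g S)"
    by (rule sum.cong) (auto simp: ksubsets_def)
  finally show ?thesis by (simp add: sum_distrib_left)
qed

lemma average_ksubsets_insert:
  assumes "finite Z" "h < card Z"
  shows "average (\<lambda>S. average (\<lambda>x. f (insert x S)) (Z - S)) (ksubsets Z h) = average f (ksubsets Z (Suc h))"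
proof -
  let ?u = "card Z"
  have "(\<Sum>S\<in>ksubsets Z h. average (\<lambda>x. f (insert x S)) (Z - S))
      = (\<Sum>S\<in>ksubsets Z h. \<Sum>x\<in>Z - S. f (insert x S)) / real (?u - h)"
    by (simp add: average_def ksubsetsD(4)[OF assms(1)] sum_divide_distrib)
  also have "\<dots> = real (Suc h) * (\<Sum>S\<in>ksubsets Z (Suc h). f S) / real (?u - h)"
    using sum_ksubsets_insert[OF assms(1)] by simp
  finally have sum_eq: "(\<Sum>S\<in>ksubsets Z h. average (\<lambda>x. f (insert x S)) (Z - S))
      = real (Suc h) * (\<Sum>S\<in>ksubsets Z (Suc h). f S) / real (?u - h)" .
  have "real (?u - h) * real (?u choose h) = real (Suc h) * real (?u choose Suc h)"
    using binomial_absorb_comp[of ?u h] binomial_absorption[of h ?u] by (metis of_nat_mult)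
  moreover have "0 < real (?u - h)" "0 < real (?u choose Suc h)" using assms(2) by auto
  ultimately show ?thesis
    unfolding average_def[where A="ksubsets Z h"] average_def[where A="ksubsets Z (Suc h)"] sum_eq
      card_ksubsets[OF assms(1)] by (simp add: field_simps del: of_nat_Suc)
qed

lemma sum_ksubsets_remove:
  assumes "finite Z" "r \<in> Z" "h < card Z"
  shows "(\<Sum>S\<in>ksubsets Z h. if r \<in> S then 1 + average (\<lambda>x. g (insert x (S - {r}))) (Z - S) else g S)
    = real (card Z choose h) - real ((card Z - 1) choose h)
      + real (card Z) * (\<Sum>S\<in>ksubsets (Z - {r}) h. g S) / (real (card Z) - real h)"
proof -
  let ?u = "card Z" and ?F = "\<lambda>S. if r \<in> S then 1 + average (\<lambda>x. g (insert x (S - {r}))) (Z - S) else g S"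
  define G where "G = (\<Sum>S\<in>ksubsets (Z - {r}) h. g S)"
  have fin: "finite (ksubsets Z h)" using assms(1) by (rule finite_ksubsets)
  have parts: "ksubsets Z h = {S\<in>ksubsets Z h. r \<in> S} \<union> ksubsets (Z - {r}) h"
    "{S\<in>ksubsets Z h. r \<in> S} \<inter> ksubsets (Z - {r}) h = {}"
    unfolding ksubsets_def by auto
  have "card (ksubsets Z h) = card {S\<in>ksubsets Z h. r \<in> S} + card (ksubsets (Z - {r}) h)"
    using parts fin by (metis card_Un_disjoint finite_Un)
  then have card_with_r: "real (card {S\<in>ksubsets Z h. r \<in> S}) = real (?u choose h) - real ((?u - 1) choose h)"
    using card_ksubsets[OF assms(1)] card_ksubsets[of "Z - {r}" h] assms(1,2) by simp
  have "(\<Sum>S\<in>{S\<in>ksubsets Z h. r \<in> S}. ?F S)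
      = (\<Sum>S\<in>{S\<in>ksubsets Z h. r \<in> S}. 1 + (\<Sum>x\<in>Z - S. g (insert x (S - {r}))) / real (?u - h))"
    by (rule sum.cong) (auto simp: average_def ksubsetsD(4)[OF assms(1)])
  also have "\<dots> = real (?u choose h) - real ((?u - 1) choose h) + real h * G / real (?u - h)"
    using sum_ksubsets_exchange[OF assms(1,2), where h=h and g=g] card_with_r
    by (simp add: G_def sum.distrib sum_divide_distrib[symmetric])
  finally have with_r: "(\<Sum>S\<in>{S\<in>ksubsets Z h. r \<in> S}. ?F S)
      = real (?u choose h) - real ((?u - 1) choose h) + real h * G / real (?u - h)" .
  have without_r: "(\<Sum>S\<in>ksubsets (Z - {r}) h. ?F S) = G"
    unfolding G_def by (rule sum.cong) (auto simp: ksubsets_def)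
  have "sum ?F (ksubsets Z h) = real (?u choose h) - real ((?u - 1) choose h) + real h * G / real (?u - h) + G"
    using parts fin with_r without_r by (metis (no_types, lifting) finite_Un sum.union_disjoint)
  then show ?thesis
    unfolding G_def[symmetric] using assms(3) by (simp add: of_nat_diff field_simps)
qed

lemma average_ksubsets_remove:
  assumes "finite Z" "r \<in> Z" "h < card Z"
  shows "average (\<lambda>S. if r \<in> S then 1 + average (\<lambda>x. g (insert x (S - {r}))) (Z - S) else g S) (ksubsets Z h)
    = real h / real (card Z) + average g (ksubsets (Z - {r}) h)"
proof -
  let ?u = "card Z"
  define c where "c = real (?u choose h)"
  define c' where "c' = real ((?u - 1) choose h)"
  define G where "G = (\<Sum>S\<in>ksubsets (Z - {r}) h. g S)"
  have "(real ?u - real h) * c = real ?u * c'"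
    using binomial_absorb_comp[of ?u h] assms(3) unfolding c_def c'_def by (metis of_nat_diff of_nat_mult less_imp_le)
  moreover have "0 < c'" "0 < real ?u - real h" "0 < c" unfolding c_def c'_def using assms(3) by auto
  ultimately have "(c - c') / c = real h / real ?u" and "real ?u * G / (real ?u - real h) / c = G / c'"
    by (auto simp: field_simps)
  then show ?thesis
    unfolding average_def[where A="ksubsets Z h"] average_def[where A="ksubsets (Z - {r}) h"]
      sum_ksubsets_remove[OF assms] card_ksubsets[OF assms(1)] card_ksubsets[OF finite_Diff[OF assms(1)]]
    using assms(1,2) by (simp add: c_def c'_def G_def add_divide_distrib)
qed

section \<open>Offline schedules\<close>

lemma valid_schedule_step:
  "valid_schedule k I Cs \<Longrightarrow> i < length I \<Longrightarrow> paging_step k (Cs!i) (I!i) (Cs!Suc i)"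
  unfolding valid_schedule_def by simp

lemma schedule_Suc_subset:
  "valid_schedule k I Cs \<Longrightarrow> i < length I \<Longrightarrow> Cs!Suc i \<subseteq> insert (I!i) (Cs!i)"
  using valid_schedule_step[of k I Cs i] unfolding paging_step_def by (auto split: if_splits)

lemma request_in_schedule: "valid_schedule k I Cs \<Longrightarrow> i < length I \<Longrightarrow> I!i \<in> Cs!Suc i"
  using valid_schedule_step[of k I Cs i] unfolding paging_step_def by (auto split: if_splits)

lemma schedule_finite_card:
  assumes "valid_schedule k I Cs" "i \<le> length I"
  shows "finite (Cs!i) \<and> card (Cs!i) \<le> k"
  using assms(2)
proof (induction i)
  case 0 then show ?case using assms(1) unfolding valid_schedule_def by simp
next
  case (Suc i)
  then have IH: "finite (Cs!i)" "card (Cs!i) \<le> k" by auto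
  have "paging_step k (Cs!i) (I!i) (Cs!Suc i)" using valid_schedule_step[OF assms(1)] Suc.prems by simp
  then consider "Cs!Suc i = Cs!i" | "card (Cs!i) < k" "Cs!Suc i = insert (I!i) (Cs!i)"
    | q where "q \<in> Cs!i" "I!i \<notin> Cs!i" "Cs!Suc i = insert (I!i) (Cs!i - {q})"
    unfolding paging_step_def by (auto split: if_splits)
  then show ?case
  proof cases
    case 3
    then have "card (Cs!i - {q}) < card (Cs!i)" using IH(1) by (intro card_Diff1_less)
    then show ?thesis using 3 IH by (simp add: card_insert_if)
  qed (use IH in \<open>auto simp: card_insert_if\<close>)
qed

lemma not_in_schedule_until_request:
  assumes v: "valid_schedule k I Cs" and q: "q \<notin> Cs!a"
    and "a \<le> b" "b \<le> length I" "\<And>i. a \<le> i \<Longrightarrow> i < b \<Longrightarrow> I!i \<noteq> q"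
  shows "q \<notin> Cs!b"
  using assms(3-5)
proof (induction b)
  case (Suc m)
  show ?case
  proof (cases "a = Suc m")
    case False
    then have "q \<notin> Cs!m" "I!m \<noteq> q" using Suc by auto
    then show ?thesis using schedule_Suc_subset[OF v, of m] Suc.prems by auto
  qed (use q in simp)
qed (use q in simp)

text \<open>The first request after time \<open>a\<close> of a page absent from the cache at time \<open>a\<close> is a fault.\<close>

lemma card_le_schedule_faults:
  assumes v: "valid_schedule k I Cs" and out: "Q \<inter> Cs!a = {}"
    and req: "\<And>q. q \<in> Q \<Longrightarrow> \<exists>i. a \<le> i \<and> i < length I \<and> P i \<and> I!i = q"
    and window: "\<And>i i'. a \<le> i \<Longrightarrow> i \<le> i' \<Longrightarrow> i' < length I \<Longrightarrow> P i' \<Longrightarrow> P i"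
  shows "card Q \<le> card {i. a \<le> i \<and> i < length I \<and> P i \<and> I!i \<notin> Cs!i}"
proof -
  define first where "first q = (LEAST i. a \<le> i \<and> i < length I \<and> P i \<and> I!i = q)" for q
  have first: "a \<le> first q \<and> first q < length I \<and> P (first q) \<and> I!(first q) = q
      \<and> (\<forall>i. a \<le> i \<and> i < first q \<longrightarrow> I!i \<noteq> q)" if q: "q \<in> Q" for q
  proof -
    obtain w where w: "a \<le> w" "w < length I" "P w" "I!w = q" using req[OF q] by blast
    have L: "a \<le> first q \<and> first q < length I \<and> P (first q) \<and> I!(first q) = q"
      unfolding first_def by (rule LeastI[of _ w]) (use w in auto)
    moreover have "I!i \<noteq> q" if "a \<le> i" "i < first q" for i
      using not_less_Least[of i "\<lambda>i. a \<le> i \<and> i < length I \<and> P i \<and> I!i = q"] that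
        window[OF that(1) less_imp_le[OF that(2)]] L unfolding first_def by auto
    ultimately show ?thesis using L by blast
  qed
  show ?thesis
  proof (rule card_inj_on_le[where f=first])
    show "inj_on first Q" by (rule inj_on_inverseI[where g="\<lambda>i. I!i"]) (use first in auto)
    show "first ` Q \<subseteq> {i. a \<le> i \<and> i < length I \<and> P i \<and> I!i \<notin> Cs!i}"
    proof (rule image_subsetI)
      fix q assume q: "q \<in> Q"
      note F = first[OF q]
      have "q \<notin> Cs!first q"
        by (rule not_in_schedule_until_request[OF v]) (use F q out in auto)
      then show "first q \<in> {i. a \<le> i \<and> i < length I \<and> P i \<and> I!i \<notin> Cs!i}" using F by simp
    qed
  qed simp
qed

fun naive_schedule :: "nat \<Rightarrow> 'a list \<Rightarrow> nat \<Rightarrow> 'a set" where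
  "naive_schedule k I 0 = {}"
| "naive_schedule k I (Suc i) = (let C = naive_schedule k I i in
     if I!i \<in> C then C else if card C < k then insert (I!i) C else insert (I!i) (C - {SOME q. q \<in> C}))"

lemma paging_step_naive_schedule:
  assumes "1 \<le> k"
  shows "paging_step k (naive_schedule k I i) (I!i) (naive_schedule k I (Suc i))"
proof -
  let ?C = "naive_schedule k I i"
  have "\<not> card ?C < k \<longrightarrow> (SOME q. q \<in> ?C) \<in> ?C"
    using assms by (auto simp: some_in_eq)
  then show ?thesis unfolding paging_step_def by (simp add: Let_def del: naive_schedule.simps(1)) blast
qed

lemma valid_naive_schedule:
  "1 \<le> k \<Longrightarrow> valid_schedule k I (map (naive_schedule k I) [0..<Suc (length I)])"
  unfolding valid_schedule_def using paging_step_naive_schedule[of k I]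
  by (simp add: nth_map_upt del: upt_Suc naive_schedule.simps(2))

lemma OPT_attained:
  assumes "1 \<le> k"
  obtains Cs where "valid_schedule k I Cs" "schedule_cost I Cs = OPT k I"
proof -
  have "\<exists>Cs. valid_schedule k I Cs \<and> schedule_cost I Cs = OPT k I"
    unfolding OPT_def by (rule LeastI_ex) (use valid_naive_schedule[OF assms] in auto)
  then show ?thesis using that by blast
qed

lemma card_remove_if:
  "finite A \<Longrightarrow> card A = card (A - {x}) + (if x \<in> A then 1 else 0)"
  using card_Suc_Diff1[of A x] by (cases "x \<in> A") auto

lemma sum_card_adjacent_le:
  fixes g :: "'b \<Rightarrow> nat"
  assumes "finite F"
  shows "(\<Sum>j\<in>{1..J}. card {i \<in> F. g i = j - 1 \<or> g i = j}) \<le> 2 * card F"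
proof -
  have card_filter: "card {x \<in> A. P x} = (\<Sum>x\<in>A. if P x then 1 else (0::nat))"
    if "finite A" for A :: "'c set" and P
    using sum.inter_filter[OF that, of "\<lambda>_. 1::nat" P] by simp
  have "(\<Sum>j\<in>{1..J}. card {i \<in> F. g i = j - 1 \<or> g i = j})
      = (\<Sum>j\<in>{1..J}. \<Sum>i\<in>F. if g i = j - 1 \<or> g i = j then 1 else 0)"
    using card_filter[OF assms] by simp
  also have "\<dots> = (\<Sum>i\<in>F. \<Sum>j\<in>{1..J}. if g i = j - 1 \<or> g i = j then 1 else 0)"
    by (rule sum.swap)
  also have "\<dots> = (\<Sum>i\<in>F. card {j \<in> {1..J}. g i = j - 1 \<or> g i = j})"
    using card_filter[of "{1..J}"] by simp
  also have "\<dots> \<le> (\<Sum>i\<in>F. 2)"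
  proof (rule sum_mono)
    fix i
    have "card {j \<in> {1..J}. g i = j - 1 \<or> g i = j} \<le> card {g i, Suc (g i)}"
      by (intro card_mono) auto
    also have "\<dots> \<le> 2" by (simp add: card_insert_if)
    finally show "card {j \<in> {1..J}. g i = j - 1 \<or> g i = j} \<le> 2" .
  qed
  finally show ?thesis by simp
qed

section \<open>The phase skeleton\<close>

definition phase_upd :: "nat \<Rightarrow> 'a set \<times> nat \<Rightarrow> 'a \<Rightarrow> 'a set \<times> nat" where
  "phase_upd k Dj r = (case Dj of (D, j) \<Rightarrow> if r \<in> D \<or> card D < k then (insert r D, j) else ({r}, Suc j))"

lemma phase_aux_nth_foldl:
  "i < length rs \<Longrightarrow> phase_aux k D j rs ! i = snd (foldl (phase_upd k) (D,j) (take (Suc i) rs))"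
proof (induction rs arbitrary: D j i)
  case Nil then show ?case by simp
next
  case (Cons r rs)
  show ?case
  proof (cases i)
    case 0 then show ?thesis by (simp add: phase_upd_def)
  next
    case (Suc i')
    then have "i' < length rs" using Cons by simp
    then show ?thesis using Cons.IH Suc by (simp add: phase_upd_def)
  qed
qed

locale mark_predict_run =
  fixes k :: nat and I :: "'a list" and p :: "bool list"
  assumes k_pos: "1 \<le> k" and length_p: "length p = length I"
begin

abbreviation "nreq \<equiv> length I"
abbreviation "ph i \<equiv> phase k I i"

text \<open>Before request \<open>t\<close>: the pages of the previous phase, the pages requested so far in the current
  phase (the marked pages of Mark\&Predict), the index of the current phase and the latest
  prediction of every page.\<close>

fun skel :: "nat \<Rightarrow> 'a set \<times> 'a set \<times> nat \<times> ('a \<Rightarrow> bool)" where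
  "skel 0 = ({}, {}, 0, \<lambda>_. False)"
| "skel (Suc t) = (case skel t of (Old, M, j, P) \<Rightarrow>
     if I!t \<in> M \<or> card M < k then (Old, insert (I!t) M, j, P(I!t := p!t))
     else (M, {I!t}, Suc j, P(I!t := p!t)))"

definition old :: "nat \<Rightarrow> 'a set" where
  "old t = fst (skel t)"

definition marked :: "nat \<Rightarrow> 'a set" where
  "marked t = fst (snd (skel t))"

definition cur :: "nat \<Rightarrow> nat" where
  "cur t = fst (snd (snd (skel t)))"

definition pred :: "nat \<Rightarrow> 'a \<Rightarrow> bool" where
  "pred t = snd (snd (snd (skel t)))"

definition new_phase :: "nat \<Rightarrow> bool" where
  "new_phase t \<longleftrightarrow> I!t \<notin> marked t \<and> \<not> card (marked t) < k"

lemma skel_0: "old 0 = {}" "marked 0 = {}" "cur 0 = 0" "pred 0 = (\<lambda>_. False)"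
  by (simp_all add: old_def marked_def cur_def pred_def)

lemma skel_Suc: "old (Suc t) = (if new_phase t then marked t else old t)"
  "marked (Suc t) = (if new_phase t then {I!t} else insert (I!t) (marked t))"
  "cur (Suc t) = (if new_phase t then Suc (cur t) else cur t)"
  "pred (Suc t) = (pred t)(I!t := p!t)"
  by (auto simp: old_def marked_def cur_def pred_def new_phase_def split: prod.splits)

lemma foldl_phase_upd: "t \<le> nreq \<Longrightarrow> foldl (phase_upd k) ({},0) (take t I) = (marked t, cur t)"
proof (induction t)
  case 0 then show ?case by (simp add: skel_0)
next
  case (Suc t)
  then have "take (Suc t) I = take t I @ [I!t]" by (simp add: take_Suc_conv_app_nth)
  then show ?case using Suc by (simp add: skel_Suc phase_upd_def new_phase_def)
qed

lemma ph_eq_cur_Suc: "i < nreq \<Longrightarrow> ph i = cur (Suc i)"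
  unfolding phase_def using phase_aux_nth_foldl[of i I k "{}" 0] foldl_phase_upd[of "Suc i"] by simp

lemma cur_Suc: "cur t \<le> cur (Suc t)" "cur (Suc t) \<le> Suc (cur t)"
  by (auto simp: skel_Suc)

lemma cur_mono: "t \<le> t' \<Longrightarrow> cur t \<le> cur t'"
proof (induction t' rule: dec_induct)
  case base then show ?case by simp
next
  case (step m) then show ?case using cur_Suc(1)[of m] by simp
qed

lemma ph_mono: "i \<le> i' \<Longrightarrow> i' < nreq \<Longrightarrow> ph i \<le> ph i'"
  using ph_eq_cur_Suc cur_mono by simp

lemma ph_le_cur: "i < t \<Longrightarrow> t \<le> nreq \<Longrightarrow> ph i \<le> cur t"
  using ph_eq_cur_Suc cur_mono by simp

lemma skel_invariants: "finite (marked t) \<and> finite (old t) \<and> card (marked t) \<le> k \<and> card (old t) \<le> k \<and>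
   (cur t = 0 \<longrightarrow> old t = {}) \<and> (0 < cur t \<longrightarrow> card (old t) = k)"
proof (induction t)
  case 0 then show ?case using k_pos by (simp add: skel_0)
next
  case (Suc t)
  show ?case
  proof (cases "new_phase t")
    case True then show ?thesis using Suc k_pos by (simp add: skel_Suc new_phase_def)
  next
    case False then show ?thesis using Suc by (auto simp add: skel_Suc new_phase_def card_insert_if)
  qed
qed

lemma finite_marked: "finite (marked t)"
  and finite_old: "finite (old t)"
  and card_marked_le: "card (marked t) \<le> k"
  and old_first_phase: "cur t = 0 \<Longrightarrow> old t = {}"
  and card_old: "0 < cur t \<Longrightarrow> card (old t) = k"
  using skel_invariants[of t] by auto

lemma marked_eq: "t \<le> nreq \<Longrightarrow> marked t = {I!i | i. i < t \<and> ph i = cur t}"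
proof (induction t)
  case 0 then show ?case by (simp add: skel_0)
next
  case (Suc t)
  have IH: "marked t = {I!i | i. i < t \<and> ph i = cur t}" using Suc by simp
  have pt: "ph t = cur (Suc t)" using Suc ph_eq_cur_Suc by simp
  show ?case
  proof (cases "new_phase t")
    case True
    have "\<And>i. i < t \<Longrightarrow> ph i \<noteq> cur (Suc t)" using ph_le_cur[of _ t] Suc True by (fastforce simp: skel_Suc)
    then have "{I!i | i. i < Suc t \<and> ph i = cur (Suc t)} = {I!t}" using pt by (auto simp: less_Suc_eq)
    then show ?thesis using True by (simp add: skel_Suc)
  next
    case False
    then have "{I!i | i. i < Suc t \<and> ph i = cur (Suc t)} = insert (I!t) {I!i | i. i < t \<and> ph i = cur t}"
      using pt by (auto simp: skel_Suc less_Suc_eq)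
    then show ?thesis using False IH by (simp add: skel_Suc)
  qed
qed

lemma old_eq: "t \<le> nreq \<Longrightarrow> old t = {I!i | i. i < t \<and> Suc (ph i) = cur t}"
proof (induction t)
  case 0 then show ?case by (simp add: skel_0)
next
  case (Suc t)
  have IH: "old t = {I!i | i. i < t \<and> Suc (ph i) = cur t}" using Suc by simp
  have pt: "ph t = cur (Suc t)" using Suc ph_eq_cur_Suc by simp
  show ?case
  proof (cases "new_phase t")
    case True
    have "{I!i | i. i < Suc t \<and> Suc (ph i) = cur (Suc t)} = {I!i | i. i < t \<and> ph i = cur t}"
      using pt True by (auto simp: skel_Suc less_Suc_eq)
    then show ?thesis using True marked_eq[of t] Suc by (simp add: skel_Suc)
  next
    case False
    then have "{I!i | i. i < Suc t \<and> Suc (ph i) = cur (Suc t)} = {I!i | i. i < t \<and> Suc (ph i) = cur t}"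
      using pt by (auto simp: skel_Suc less_Suc_eq)
    then show ?thesis using False IH by (simp add: skel_Suc)
  qed
qed

lemma pred_last_request: "i < t \<Longrightarrow> I!i = q \<Longrightarrow> (\<forall>i'. i < i' \<and> i' < t \<longrightarrow> I!i' \<noteq> q) \<Longrightarrow> pred t q = p!i"
proof (induction t)
  case 0 then show ?case by simp
next
  case (Suc t)
  show ?case
  proof (cases "i = t")
    case True then show ?thesis using Suc by (simp add: skel_Suc)
  next
    case False
    then have it: "i < t" "I!t \<noteq> q" using Suc by auto
    then have "pred t q = p!i" using Suc.IH Suc.prems by auto
    then show ?thesis using it by (auto simp add: skel_Suc)
  qed
qed

definition pending :: "nat \<Rightarrow> 'a \<Rightarrow> bool" where
  "pending t q \<longleftrightarrow> (\<exists>i. t \<le> i \<and> i < nreq \<and> ph i = cur t \<and> I!i = q)"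

lemma ph_not_new_phase: "t < nreq \<Longrightarrow> \<not> new_phase t \<Longrightarrow> ph t = cur t"
  using ph_eq_cur_Suc[of t] by (simp add: skel_Suc)

lemma ph_new_phase: "t < nreq \<Longrightarrow> new_phase t \<Longrightarrow> ph t = Suc (cur t)"
  using ph_eq_cur_Suc[of t] by (simp add: skel_Suc)

lemma pending_self: "t < nreq \<Longrightarrow> \<not> new_phase t \<Longrightarrow> pending t (I!t)"
  unfolding pending_def using ph_not_new_phase by auto

lemma pending_Suc:
  assumes "\<not> new_phase t" "q \<noteq> I!t"
  shows "pending (Suc t) q = pending t q"
proof -
  have "(\<exists>i\<ge>t. P i \<and> I!i = q) \<longleftrightarrow> (\<exists>i\<ge>Suc t. P i \<and> I!i = q)" for P
  proof
    assume "\<exists>i\<ge>t. P i \<and> I!i = q"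
    then obtain i where "t \<le> i" "P i" "I!i = q" by blast
    moreover have "i \<noteq> t" using assms(2) \<open>I!i = q\<close> by auto
    ultimately show "\<exists>i\<ge>Suc t. P i \<and> I!i = q" by (auto intro!: exI[of _ i])
  qed (auto intro: Suc_leD)
  from this[of "\<lambda>i. i < nreq \<and> ph i = cur t"] show ?thesis
    unfolding pending_def using assms(1) by (simp add: skel_Suc)
qed

lemma not_pending_new_phase: "t < nreq \<Longrightarrow> new_phase t \<Longrightarrow> \<not> pending t q"
  unfolding pending_def using ph_new_phase ph_mono by (metis Suc_n_not_le_n)

lemma card_marked_pending_le: "t \<le> nreq \<Longrightarrow> card (marked t \<union> {q. pending t q}) \<le> k"
proof (induction "nreq - t" arbitrary: t)
  case 0
  then have "t = nreq" by simp
  then have "{q. pending t q} = {}" unfolding pending_def by auto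
  then show ?case using card_marked_le by simp
next
  case (Suc m)
  then have t: "t < nreq" by simp
  show ?case
  proof (cases "new_phase t")
    case True
    then have "marked t \<union> {q. pending t q} = marked t" using not_pending_new_phase t by auto
    then show ?thesis using card_marked_le by simp
  next
    case False
    have "marked (Suc t) \<union> {q. pending (Suc t) q} = marked t \<union> {q. pending t q}"
      using False pending_Suc[OF False] pending_self[OF t False] by (auto simp: skel_Suc) metis
    moreover have "card (marked (Suc t) \<union> {q. pending (Suc t) q}) \<le> k" using Suc t by simp
    ultimately show ?thesis by simp
  qed
qed

section \<open>The potential\<close>

definition stale :: "nat \<Rightarrow> 'a set" where
  "stale t = old t - marked t"

definition stale0 :: "nat \<Rightarrow> 'a set" where
  "stale0 t = {q \<in> stale t. \<not> pred t q}"

definition stale1 :: "nat \<Rightarrow> 'a set" where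
  "stale1 t = {q \<in> stale t. pred t q}"

text \<open>Prediction errors of the previous phase that are already determined at time \<open>t\<close> but not
  yet paid for: stale 1-pages that will be requested again in the current phase, and stale 0-pages
  that will not.\<close>

definition pending_err1 :: "nat \<Rightarrow> nat" where
  "pending_err1 t = card {q \<in> stale1 t. pending t q}"

definition pending_err0 :: "nat \<Rightarrow> nat" where
  "pending_err0 t = card {q \<in> stale0 t. \<not> pending t q}"

text \<open>Comparing with \<open>old (Suc i)\<close> makes the first request of a phase count as new unless its
  page was requested in the phase that just ended.\<close>

definition is_new :: "nat \<Rightarrow> bool" where
  "is_new i \<longleftrightarrow> I!i \<notin> marked i \<and> I!i \<notin> old (Suc i)"

definition new_from :: "nat \<Rightarrow> nat" where
  "new_from t = card {i. t \<le> i \<and> i < nreq \<and> is_new i}"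

definition err_from :: "bool \<Rightarrow> nat \<Rightarrow> nat" where
  "err_from h t = card {i. counted k I i \<and> p!i = h \<and> pstar k I i = (\<not> h) \<and> cur t \<le> ph i}"

definition pot :: "nat \<Rightarrow> real" where
  "pot t = real (new_from t) + real (pending_err1 t) + real (err_from True t)
     + real (pending_err0 t) * harm (card (stale0 t)) + harm k * real (err_from False t)"

lemma pot_nonneg: "0 \<le> pot t"
  unfolding pot_def by (simp add: harm_nonneg)

lemma finite_stale: "finite (stale t)" "finite (stale0 t)" "finite (stale1 t)"
  using finite_old by (auto simp: stale_def stale0_def stale1_def)

lemma stale_parts:
  "stale0 t \<inter> stale1 t = {}" "stale0 t \<union> stale1 t = stale t" "marked t \<inter> stale t = {}"
  "stale0 t \<subseteq> stale t" "stale1 t \<subseteq> stale t" "stale t \<subseteq> old t"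
  by (auto simp: stale_def stale0_def stale1_def)

lemma card_stale: "card (stale t) = card (stale0 t) + card (stale1 t)"
  using finite_stale stale_parts[of t] card_Un_disjoint[of "stale0 t" "stale1 t"] by simp

lemma stale_iff:
  "q \<in> stale t \<longleftrightarrow> q \<in> old t \<and> q \<notin> marked t"
  "q \<in> stale0 t \<longleftrightarrow> q \<in> old t \<and> q \<notin> marked t \<and> \<not> pred t q"
  "q \<in> stale1 t \<longleftrightarrow> q \<in> old t \<and> q \<notin> marked t \<and> pred t q"
  by (auto simp: stale_def stale0_def stale1_def)

lemma stale_first_phase: "cur t = 0 \<Longrightarrow> stale t = {} \<and> stale0 t = {} \<and> stale1 t = {}"
  using old_first_phase by (auto simp: stale_def stale0_def stale1_def)

lemma cur_pos_stale: "q \<in> stale t \<Longrightarrow> 0 < cur t"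
  using old_first_phase[of t] by (auto simp: stale_def)

lemma not_new_phase_data:
  assumes "\<not> new_phase t"
  shows "old (Suc t) = old t" "marked (Suc t) = insert (I!t) (marked t)" "cur (Suc t) = cur t"
    "pred (Suc t) = (pred t)(I!t := p!t)"
    "stale (Suc t) = stale t - {I!t}" "stale0 (Suc t) = stale0 t - {I!t}" "stale1 (Suc t) = stale1 t - {I!t}"
  using assms by (auto simp: skel_Suc stale_def stale0_def stale1_def)

lemma new_phase_data:
  assumes "new_phase t"
  shows "old (Suc t) = marked t" "marked (Suc t) = {I!t}" "cur (Suc t) = Suc (cur t)"
    "pred (Suc t) = (pred t)(I!t := p!t)"
    "stale (Suc t) = marked t" "stale0 (Suc t) = {q \<in> marked t. \<not> pred t q}"
    "stale1 (Suc t) = {q \<in> marked t. pred t q}"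
    "card (marked t) = k" "I!t \<notin> marked t"
  using assms card_marked_le[of t] by (auto simp: skel_Suc stale_def stale0_def stale1_def new_phase_def)

lemma new_from_Suc: "t < nreq \<Longrightarrow> new_from t = new_from (Suc t) + (if is_new t then 1 else 0)"
proof -
  assume t: "t < nreq"
  have "{i. t \<le> i \<and> i < nreq \<and> is_new i}
      = {i. Suc t \<le> i \<and> i < nreq \<and> is_new i} \<union> (if is_new t then {t} else {})"
    using t by (auto simp: le_eq_less_or_eq Suc_le_eq)
  then show ?thesis unfolding new_from_def by (auto simp: card_insert_if)
qed

lemma pot_not_new_phase:
  assumes t: "t < nreq" and nb: "\<not> new_phase t"
  shows "pot t = pot (Suc t) + (if I!t \<notin> marked t \<and> I!t \<notin> old t then 1 else 0)
    + (if I!t \<in> stale1 t then 1 else 0)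
    + (if I!t \<in> stale0 t then real (pending_err0 t) / real (card (stale0 t)) else 0)"
proof -
  let ?r = "I!t"
  note d = not_new_phase_data[OF nb]
  have pend: "\<And>q. q \<noteq> ?r \<Longrightarrow> pending (Suc t) q = pending t q" and pend_r: "pending t ?r"
    using pending_Suc[OF nb] pending_self[OF t nb] by auto
  have new: "new_from t = new_from (Suc t) + (if ?r \<notin> marked t \<and> ?r \<notin> old t then 1 else 0)"
    using new_from_Suc[OF t] d unfolding is_new_def by simp
  have err: "err_from h (Suc t) = err_from h t" for h
    unfolding err_from_def using d by simp
  have "{q \<in> stale1 (Suc t). pending (Suc t) q} = {q \<in> stale1 t. pending t q} - {?r}"
    using d pend by auto
  then have e1: "pending_err1 t = pending_err1 (Suc t) + (if ?r \<in> stale1 t then 1 else 0)"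
    unfolding pending_err1_def using pend_r finite_stale(3) card_remove_if[of "{q \<in> stale1 t. pending t q}" ?r]
    by simp
  have "q \<noteq> ?r" if "\<not> pending t q" for q using that pend_r by auto
  then have "{q \<in> stale0 (Suc t). \<not> pending (Suc t) q} = {q \<in> stale0 t. \<not> pending t q}"
    using d pend by auto
  then have e0: "pending_err0 (Suc t) = pending_err0 t"
    unfolding pending_err0_def by simp
  have "real (pending_err0 t) * harm (card (stale0 t)) = real (pending_err0 t) * harm (card (stale0 (Suc t)))
      + (if ?r \<in> stale0 t then real (pending_err0 t) / real (card (stale0 t)) else 0)"
  proof (cases "?r \<in> stale0 t")
    case True
    then have "card (stale0 t) = Suc (card (stale0 (Suc t)))"
      using d(6) finite_stale(2) card_Suc_Diff1 by metis
    then show ?thesis using True by (simp add: harm_Suc field_simps)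
  qed (simp add: d(6))
  then show ?thesis unfolding pot_def using new err e1 e0 by simp
qed

definition last_req :: "nat \<Rightarrow> 'a \<Rightarrow> nat" where
  "last_req t q = (GREATEST i. i < t \<and> I!i = q)"

lemma last_req_props:
  assumes t: "t \<le> nreq" and q: "q \<in> marked t"
  shows "last_req t q < t" "I!(last_req t q) = q" "ph (last_req t q) = cur t"
    "\<And>i'. last_req t q < i' \<Longrightarrow> i' < t \<Longrightarrow> I!i' \<noteq> q"
proof -
  obtain i0 where i0: "i0 < t" "ph i0 = cur t" "I!i0 = q" using marked_eq[OF t] q by auto
  have bd: "\<forall>y. y < t \<and> I!y = q \<longrightarrow> y \<le> t" by auto
  have G: "last_req t q < t \<and> I!(last_req t q) = q" unfolding last_req_def
    using GreatestI_nat[of "\<lambda>i. i < t \<and> I!i = q" i0 t] i0 bd by blast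
  then show "last_req t q < t" "I!(last_req t q) = q" by auto
  have "i0 \<le> last_req t q" unfolding last_req_def
    using Greatest_le_nat[of "\<lambda>i. i < t \<and> I!i = q" i0 t] i0 bd by blast
  then have "ph i0 \<le> ph (last_req t q)" using ph_mono G t by simp
  moreover have "ph (last_req t q) \<le> cur t" using ph_le_cur G t by simp
  ultimately show "ph (last_req t q) = cur t" using i0 by simp
  fix i' assume "last_req t q < i'" "i' < t"
  then show "I!i' \<noteq> q" unfolding last_req_def
    using Greatest_le_nat[of "\<lambda>i. i < t \<and> I!i = q" i' t] bd by (metis leD last_req_def)
qed

lemma counted_last_req:
  assumes t: "t < nreq" and b: "new_phase t" and q: "q \<in> marked t"
  shows "counted k I (last_req t q)" "ph (last_req t q) = cur t" "p!(last_req t q) = pred t q"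
    "pstar k I (last_req t q) \<longleftrightarrow> \<not> pending (Suc t) q"
proof -
  note L = last_req_props[OF less_imp_le[OF t] q]
  have pt: "ph t = Suc (cur t)" using ph_new_phase[OF t b] .
  show "ph (last_req t q) = cur t" using L by simp
  show "counted k I (last_req t q)" unfolding counted_def
  proof (intro conjI notI)
    show "last_req t q < nreq" using L t by simp
    have "ph t \<le> ph (nreq - 1)" using ph_mono[of t "nreq - 1"] t by simp
    then show "ph (last_req t q) < ph (nreq - 1)" using L pt by simp
    assume "\<exists>i'>last_req t q. i' < nreq \<and> ph i' = ph (last_req t q) \<and> I ! i' = I ! last_req t q"
    then obtain i' where i': "i' > last_req t q" "i' < nreq" "ph i' = cur t" "I!i' = q" using L by auto
    show False
    proof (cases "i' < t")
      case True then show False using L(4)[OF i'(1) True] i' by simp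
    next
      case False then show False using ph_mono[of t i'] pt i' by simp
    qed
  qed
  show "p!(last_req t q) = pred t q" using pred_last_request[of "last_req t q" t q] L by simp
  have r: "I!t \<notin> marked t" using b unfolding new_phase_def by simp
  have "(\<exists>i'<nreq. ph i' = Suc (cur t) \<and> I ! i' = q) \<longleftrightarrow> (\<exists>i\<ge>Suc t. i < nreq \<and> ph i = Suc (cur t) \<and> I ! i = q)"
  proof
    assume "\<exists>i'<nreq. ph i' = Suc (cur t) \<and> I ! i' = q"
    then obtain i' where i': "i' < nreq" "ph i' = Suc (cur t)" "I!i' = q" by auto
    moreover have "\<not> i' < t" using ph_le_cur[of i' t] t i' by auto
    moreover have "i' \<noteq> t" using r q i' by auto
    ultimately show "\<exists>i\<ge>Suc t. i < nreq \<and> ph i = Suc (cur t) \<and> I ! i = q" by (auto intro!: exI[of _ i'])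
  qed auto
  then show "pstar k I (last_req t q) \<longleftrightarrow> \<not> pending (Suc t) q"
    unfolding pstar_def pending_def L(2) L(3) using b by (simp add: skel_Suc)
qed

lemma card_pending_le_errors:
  assumes t: "t < nreq" and b: "new_phase t"
  shows "card {q \<in> marked t. pred t q = h \<and> pending (Suc t) q = h}
    \<le> card {i. counted k I i \<and> p!i = h \<and> pstar k I i = (\<not> h) \<and> ph i = cur t}"
proof (rule card_inj_on_le[where f="last_req t"])
  show "inj_on (last_req t) {q \<in> marked t. pred t q = h \<and> pending (Suc t) q = h}"
    by (rule inj_on_inverseI[where g="\<lambda>i. I!i"]) (use last_req_props[OF less_imp_le[OF t]] in auto)
  show "last_req t ` {q \<in> marked t. pred t q = h \<and> pending (Suc t) q = h}
      \<subseteq> {i. counted k I i \<and> p!i = h \<and> pstar k I i = (\<not> h) \<and> ph i = cur t}"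
    using counted_last_req[OF t b] by auto
  show "finite {i. counted k I i \<and> p!i = h \<and> pstar k I i = (\<not> h) \<and> ph i = cur t}"
    by (rule finite_subset[of _ "{..<nreq}"]) (auto simp: counted_def)
qed

lemma err_from_new_phase:
  assumes "new_phase t"
  shows "err_from h t = err_from h (Suc t)
    + card {i. counted k I i \<and> p!i = h \<and> pstar k I i = (\<not> h) \<and> ph i = cur t}"
proof -
  let ?A = "{i. counted k I i \<and> p!i = h \<and> pstar k I i = (\<not> h) \<and> cur (Suc t) \<le> ph i}"
  let ?B = "{i. counted k I i \<and> p!i = h \<and> pstar k I i = (\<not> h) \<and> ph i = cur t}"
  have "finite ?A" "finite ?B" by (auto intro: finite_subset[of _ "{..<nreq}"] simp: counted_def)
  moreover have "{i. counted k I i \<and> p!i = h \<and> pstar k I i = (\<not> h) \<and> cur t \<le> ph i} = ?A \<union> ?B"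
    "?A \<inter> ?B = {}"
    using new_phase_data(3)[OF assms] by auto
  ultimately show ?thesis unfolding err_from_def by (simp add: card_Un_disjoint)
qed

lemma pot_new_phase:
  assumes t: "t < nreq" and b: "new_phase t"
  shows "1 + pot (Suc t) \<le> pot t"
proof -
  note d = new_phase_data[OF b]
  let ?B = "\<lambda>h. card {i. counted k I i \<and> p!i = h \<and> pstar k I i = (\<not> h) \<and> ph i = cur t}"
  have eq1: "{q \<in> stale1 (Suc t). pending (Suc t) q} = {q \<in> marked t. pred t q = True \<and> pending (Suc t) q = True}"
    and eq0: "{q \<in> stale0 (Suc t). \<not> pending (Suc t) q} = {q \<in> marked t. pred t q = False \<and> pending (Suc t) q = False}"
    unfolding d by auto
  have e1: "pending_err1 (Suc t) \<le> ?B True"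
    unfolding pending_err1_def by (subst eq1) (rule card_pending_le_errors[OF t b])
  have e0: "pending_err0 (Suc t) \<le> ?B False"
    unfolding pending_err0_def by (subst eq0) (rule card_pending_le_errors[OF t b])
  have "card (stale0 (Suc t)) \<le> card (marked t)"
    unfolding d(6) using finite_marked by (intro card_mono) auto
  then have "card (stale0 (Suc t)) \<le> k" using d(8) by simp
  then have "real (pending_err0 (Suc t)) * harm (card (stale0 (Suc t))) \<le> real (?B False) * harm k"
    using e0 by (intro mult_mono harm_mono) (auto simp: harm_nonneg)
  moreover have "new_from t = new_from (Suc t) + 1"
    using new_from_Suc[OF t] d unfolding is_new_def by simp
  moreover have "0 \<le> real (pending_err1 t) + real (pending_err0 t) * harm (card (stale0 t))"
    by (simp add: harm_nonneg)
  ultimately show ?thesis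
    unfolding pot_def using e1 err_from_new_phase[OF b] by (simp add: algebra_simps)
qed

section \<open>Expected cost of a configuration\<close>

definition reqs :: "('a \<times> bool) list" where
  "reqs = zip I p"

text \<open>The state of Mark\&Predict before request \<open>t\<close> differs from the skeleton only in which stale
  pages have been evicted: \<open>S1\<close> of the stale 1-pages and \<open>S0\<close> of the stale 0-pages.\<close>

definition config :: "nat \<Rightarrow> 'a set \<Rightarrow> 'a set \<Rightarrow> 'a mp_state" where
  "config t S1 S0 = (marked t \<union> (stale1 t - S1) \<union> (stale0 t - S0), marked t, pred t)"

definition avg_cost :: "nat \<Rightarrow> 'a set \<Rightarrow> nat \<Rightarrow> real" where
  "avg_cost t S1 h = average (\<lambda>S. exp_cost k (config t S1 S) (drop t reqs)) (ksubsets (stale0 t) h)"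

text \<open>1-pages are evicted before 0-pages, and every new page of the current phase has evicted
  exactly one stale page.\<close>

definition evict_inv :: "nat \<Rightarrow> 'a set \<Rightarrow> nat \<Rightarrow> bool" where
  "evict_inv t S1 h \<longleftrightarrow> S1 \<subseteq> stale1 t \<and> (0 < h \<longrightarrow> S1 = stale1 t) \<and>
     (0 < cur t \<longrightarrow> card S1 + h = card (marked t - old t)) \<and> (cur t = 0 \<longrightarrow> h = 0)"

lemma drop_reqs: "t < nreq \<Longrightarrow> drop t reqs = (I!t, p!t) # drop (Suc t) reqs"
  unfolding reqs_def using Cons_nth_drop_Suc[of t "zip I p"] length_p by simp

lemma avg_cost_0: "avg_cost t S1 0 = exp_cost k (config t S1 {}) (drop t reqs)"
  unfolding avg_cost_def ksubsets_0[OF finite_stale(2)] by (simp add: average_def)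

lemma card_config:
  assumes inv: "evict_inv t S1 h" and S: "S \<in> ksubsets (stale0 t) h" and j: "0 < cur t"
  shows "card (marked t \<union> (stale1 t - S1) \<union> (stale0 t - S)) = k"
proof -
  have S1: "S1 \<subseteq> stale1 t" and c: "card S1 + h = card (marked t - old t)"
    using inv j unfolding evict_inv_def by auto
  note SS = ksubsetsD[OF finite_stale(2) S]
  note f = finite_marked finite_stale finite_old
  have "card (marked t \<union> (stale1 t - S1) \<union> (stale0 t - S))
      = card (marked t) + card (stale1 t - S1) + card (stale0 t - S)"
    using f stale_parts[of t] by (subst card_Un_disjoint; auto simp: card_Un_disjoint)+
  also have "card (stale1 t - S1) = card (stale1 t) - card S1"
    using S1 f by (simp add: card_Diff_subset finite_subset)
  finally have e: "card (marked t \<union> (stale1 t - S1) \<union> (stale0 t - S))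
      = card (marked t) + (card (stale1 t) - card S1) + (card (stale0 t) - h)" using SS by simp
  note card_stale[of t]
  moreover have "card (marked t) = card (marked t \<inter> old t) + card (marked t - old t)"
    using f by (metis card_Int_Diff)
  moreover have "card (old t) = card (old t \<inter> marked t) + card (stale t)"
    using f unfolding stale_def by (metis card_Int_Diff)
  moreover have "card S1 \<le> card (stale1 t)" using S1 f by (simp add: card_mono)
  moreover have "h \<le> card (stale0 t)" using SS f by (metis card_mono)
  ultimately show ?thesis using e c card_old[OF j] by (simp add: Int_commute)
qed

lemma card_new_pending_le_stale:
  assumes t: "t \<le> nreq" and j: "0 < cur t"
  shows "card (marked t - old t) + card {q \<in> stale t. pending t q} \<le> card (stale t)"
proof -
  let ?L = "{q \<in> stale t. pending t q}"
  note f = finite_marked[of t] finite_stale[of t] finite_old[of t]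
  have "finite {q. pending t q}" by (rule finite_subset[of _ "set I"]) (auto simp: pending_def)
  then have "card (marked t \<union> ?L) \<le> card (marked t \<union> {q. pending t q})"
    using f by (intro card_mono) auto
  also have "\<dots> \<le> card (old t)" using card_marked_pending_le[OF t] card_old[OF j] by simp
  finally have "card (marked t) + card ?L \<le> card (old t)"
    using f stale_parts[of t] by (subst (asm) card_Un_disjoint) auto
  moreover have "card (marked t) = card (marked t \<inter> old t) + card (marked t - old t)"
    "card (old t) = card (marked t \<inter> old t) + card (stale t)"
    using f unfolding stale_def by (metis card_Int_Diff Int_commute)+
  ultimately show ?thesis by simp
qed

lemma h_le_pending_err0:
  assumes t: "t \<le> nreq" and inv: "evict_inv t S1 h" and h: "0 < h"
  shows "h \<le> pending_err0 t"
proof -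
  have j: "0 < cur t" and "card (stale1 t) + h = card (marked t - old t)"
    using inv h unfolding evict_inv_def by auto
  moreover note card_stale[of t]
  moreover have "card {q \<in> stale0 t. pending t q} \<le> card {q \<in> stale t. pending t q}"
    using finite_stale stale_parts(4)[of t] by (intro card_mono) auto
  moreover have "card (stale0 t) = pending_err0 t + card {q \<in> stale0 t. pending t q}"
    unfolding pending_err0_def using card_Int_Diff[OF finite_stale(2), where B="{q. pending t q}"]
    by (simp add: set_diff_eq Int_def)
  ultimately show ?thesis using card_new_pending_le_stale[OF t j] by simp
qed

lemma exp_cost_config:
  "t < nreq \<Longrightarrow> exp_cost k (config t S1 S) (drop t reqs) =
    exp_cost k (marked t \<union> (stale1 t - S1) \<union> (stale0 t - S), marked t, pred t) ((I!t, p!t) # drop (Suc t) reqs)"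
  unfolding config_def using drop_reqs by simp

lemma config_new_phase:
  assumes b: "new_phase t" and inv: "evict_inv t S1 h" and S: "S \<in> ksubsets (stale0 t) h"
  shows "marked t \<union> (stale1 t - S1) \<union> (stale0 t - S) = marked t"
proof (cases "cur t = 0")
  case True then show ?thesis using stale_first_phase by auto
next
  case False
  then have "card (marked t \<union> (stale1 t - S1) \<union> (stale0 t - S)) = card (marked t)"
    using card_config[OF inv S] new_phase_data(8)[OF b] by simp
  moreover have "finite (marked t \<union> (stale1 t - S1) \<union> (stale0 t - S))"
    using finite_marked finite_stale by simp
  ultimately show ?thesis by (intro sym[OF card_subset_eq]) auto
qed

lemma exp_cost_new_phase_le:
  assumes t: "t < nreq" and b: "new_phase t"
    and IH: "\<And>S1 h. evict_inv (Suc t) S1 h \<Longrightarrow> avg_cost (Suc t) S1 h \<le> pot (Suc t)"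
  shows "exp_cost k (marked t, marked t, pred t) ((I!t, p!t) # drop (Suc t) reqs) \<le> 1 + pot (Suc t)"
proof -
  note d = new_phase_data[OF b]
  let ?r = "I!t" and ?M = "marked t" and ?P' = "(pred t)(I!t := p!t)"
  let ?next = "\<lambda>q. exp_cost k (insert ?r (?M - {q}), {?r}, ?P') (drop (Suc t) reqs)"
  have "{q \<in> ?M. ?P' q} = stale1 (Suc t)" using d by auto
  then have cands: "evict_candidates ?M ?P' = (if stale1 (Suc t) \<noteq> {} then stale1 (Suc t) else ?M)"
    unfolding evict_candidates_def by simp
  have "?M \<noteq> {}" using d(8) k_pos by auto
  then have step: "exp_cost k (?M, ?M, pred t) ((?r, p!t) # drop (Suc t) reqs) = 1 + average ?next (evict_candidates ?M ?P')"
    using exp_cost_evict[of ?r ?M k "{}" ?M] d(8,9) finite_marked by simp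
  have "average ?next (evict_candidates ?M ?P') \<le> pot (Suc t)"
  proof (cases "stale1 (Suc t) = {}")
    case False
    show ?thesis unfolding cands using False
    proof (simp, intro average_le)
      fix x assume x: "x \<in> stale1 (Suc t)"
      have "evict_inv (Suc t) {x} 0" unfolding evict_inv_def using x d by (auto simp: insert_Diff_if)
      moreover have "config (Suc t) {x} {} = (insert ?r (?M - {x}), {?r}, ?P')"
        unfolding config_def using d x by auto
      ultimately show "?next x \<le> pot (Suc t)" using IH[of "{x}" 0] by (simp add: avg_cost_0)
    qed (use finite_stale pot_nonneg in auto)
  next
    case True
    then have stale0: "stale0 (Suc t) = ?M" using d by auto
    have "config (Suc t) {} {x} = (insert ?r (?M - {x}), {?r}, ?P')" if "x \<in> ?M" for x
      unfolding config_def using d that True by auto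
    then have "average ?next ?M = avg_cost (Suc t) {} 1"
      unfolding avg_cost_def stale0 average_ksubsets_1[OF finite_marked] by (auto intro!: sum.cong simp: average_def)
    also have "\<dots> \<le> pot (Suc t)" by (rule IH) (use True d in \<open>auto simp: evict_inv_def insert_Diff_if\<close>)
    finally show ?thesis unfolding cands using True by simp
  qed
  then show ?thesis using step by simp
qed

lemma avg_cost_new_phase:
  assumes t: "t < nreq" and b: "new_phase t" and inv: "evict_inv t S1 h"
    and IH: "\<And>S1 h. evict_inv (Suc t) S1 h \<Longrightarrow> avg_cost (Suc t) S1 h \<le> pot (Suc t)"
  shows "avg_cost t S1 h \<le> pot t"
  unfolding avg_cost_def
proof (rule average_le)
  fix S assume "S \<in> ksubsets (stale0 t) h"
  then show "exp_cost k (config t S1 S) (drop t reqs) \<le> pot t"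
    using exp_cost_new_phase_le[OF t b IH] pot_new_phase[OF t b]
    by (simp add: exp_cost_config[OF t] config_new_phase[OF b inv])
qed (simp_all add: finite_ksubsets finite_stale pot_nonneg)

lemma avg_cost_marked:
  assumes t: "t < nreq" and r: "I!t \<in> marked t" and inv: "evict_inv t S1 h"
    and IH: "\<And>S1 h. evict_inv (Suc t) S1 h \<Longrightarrow> avg_cost (Suc t) S1 h \<le> pot (Suc t)"
  shows "avg_cost t S1 h \<le> pot t"
proof -
  have nb: "\<not> new_phase t" using r unfolding new_phase_def by simp
  note d = not_new_phase_data[OF nb]
  have "I!t \<notin> stale t" using r stale_parts[of t] by auto
  then have same: "marked (Suc t) = marked t" "stale0 (Suc t) = stale0 t" "stale1 (Suc t) = stale1 t"
    using d r stale_parts[of t] by auto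
  have "exp_cost k (config t S1 S) (drop t reqs) = exp_cost k (config (Suc t) S1 S) (drop (Suc t) reqs)" for S
    unfolding exp_cost_config[OF t] using r by (subst exp_cost_hit) (auto simp: config_def same d(4) insert_absorb)
  then have "avg_cost t S1 h = avg_cost (Suc t) S1 h"
    unfolding avg_cost_def same by simp
  also have "\<dots> \<le> pot (Suc t)"
    using inv by (intro IH) (simp add: evict_inv_def same d)
  also have "\<dots> = pot t"
    using pot_not_new_phase[OF t nb] r \<open>I!t \<notin> stale t\<close> stale_parts[of t] by auto
  finally show ?thesis .
qed

lemma config_full:
  assumes j: "0 < cur t" and inv: "evict_inv t S1 h" and S: "S \<in> ksubsets (stale0 t) h"
    and rM: "I!t \<notin> marked t" and nb: "\<not> new_phase t"
  shows "card (marked t \<union> (stale1 t - S1) \<union> (stale0 t - S)) = k"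
    "(stale1 t - S1) \<union> (stale0 t - S) \<noteq> {}"
proof -
  show c: "card (marked t \<union> (stale1 t - S1) \<union> (stale0 t - S)) = k" by (rule card_config[OF inv S j])
  have "card (marked t) < k" using rM nb unfolding new_phase_def by simp
  moreover have "marked t \<union> (stale1 t - S1) \<union> (stale0 t - S) = marked t"
    if "(stale1 t - S1) \<union> (stale0 t - S) = {}" using that by auto
  ultimately show "(stale1 t - S1) \<union> (stale0 t - S) \<noteq> {}" using c by auto
qed

lemma exp_cost_config_fault:
  assumes t: "t < nreq" and j: "0 < cur t" and inv: "evict_inv t S1 h" and S: "S \<in> ksubsets (stale0 t) h"
    and rM: "I!t \<notin> marked t" and nb: "\<not> new_phase t"
    and rC: "I!t \<notin> marked t \<union> (stale1 t - S1) \<union> (stale0 t - S)"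
  shows "exp_cost k (config t S1 S) (drop t reqs) = 1 + average
      (\<lambda>q. exp_cost k (insert (I!t) (marked t \<union> (stale1 t - S1) \<union> (stale0 t - S) - {q}),
                       insert (I!t) (marked t), (pred t)(I!t := p!t)) (drop (Suc t) reqs))
      (if stale1 t - S1 \<noteq> {} then stale1 t - S1 else stale0 t - S)"
proof -
  let ?C = "marked t \<union> (stale1 t - S1) \<union> (stale0 t - S)"
  note full = config_full[OF j inv S rM nb]
  have not_sub: "\<not> ?C \<subseteq> marked t" using full(2) stale_parts[of t] by auto
  have "?C - marked t = (stale1 t - S1) \<union> (stale0 t - S)" using stale_parts[of t] by auto
  moreover have "{q \<in> (stale1 t - S1) \<union> (stale0 t - S). ((pred t)(I!t := p!t)) q} = stale1 t - S1"
    using rC stale_parts[of t] by (auto simp: stale0_def stale1_def)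
  ultimately have "evict_candidates (?C - marked t) ((pred t)(I!t := p!t))
      = (if stale1 t - S1 \<noteq> {} then stale1 t - S1 else stale0 t - S)"
    unfolding evict_candidates_def by auto
  moreover have "?C - marked t \<noteq> {}" using not_sub by auto
  moreover have "finite ?C" using finite_marked finite_stale by simp
  ultimately show ?thesis
    unfolding exp_cost_config[OF t] using not_sub
    by (subst exp_cost_evict[OF rC _ _ refl]) (auto simp: full(1))
qed

lemma evict_inv_Suc_fault:
  assumes nb: "\<not> new_phase t" and j: "0 < cur t" and rM: "I!t \<notin> marked t" and r0: "I!t \<notin> stale0 t"
    and inv: "evict_inv t S1 h" and rS: "I!t \<notin> stale1 t - S1"
    and S1': "S1' \<subseteq> stale1 t - {I!t}" "card S1' + h' = Suc (card (S1 - {I!t}) + h)"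
      "0 < h' \<longrightarrow> S1' = stale1 t - {I!t}"
  shows "evict_inv (Suc t) S1' h'"
proof -
  let ?r = "I!t"
  note d = not_new_phase_data[OF nb]
  have S1: "S1 \<subseteq> stale1 t" "card S1 + h = card (marked t - old t)" using inv j unfolding evict_inv_def by auto
  have fin: "finite S1" using S1(1) finite_stale(3) by (rule finite_subset)
  have "card (marked (Suc t) - old (Suc t)) = Suc (card (S1 - {?r}) + h)"
  proof (cases "?r \<in> old t")
    case True
    then have "?r \<in> S1" using rM r0 rS stale_iff by blast
    moreover have "marked (Suc t) - old (Suc t) = marked t - old t" using True d by auto
    ultimately show ?thesis using S1(2) fin card_Suc_Diff1 by fastforce
  next
    case False
    then have "?r \<notin> S1" using S1(1) stale_parts(5,6) by blast
    moreover have "marked (Suc t) - old (Suc t) = insert ?r (marked t - old t)" using False d by auto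
    ultimately show ?thesis using S1(2) rM finite_marked by simp
  qed
  then show ?thesis using S1' j unfolding evict_inv_def d by simp
qed

lemma avg_cost_fault_stale1:
  assumes t: "t < nreq" and nb: "\<not> new_phase t" and j: "0 < cur t"
    and rM: "I!t \<notin> marked t" and r0: "I!t \<notin> stale0 t" and inv: "evict_inv t S1 0"
    and ne: "stale1 t - S1 \<noteq> {}" and rS: "I!t \<notin> stale1 t - S1"
    and IH: "\<And>S1 h. evict_inv (Suc t) S1 h \<Longrightarrow> avg_cost (Suc t) S1 h \<le> pot (Suc t)"
  shows "avg_cost t S1 0 \<le> 1 + pot (Suc t)"
proof -
  let ?r = "I!t" and ?C = "marked t \<union> (stale1 t - S1) \<union> (stale0 t - {})"
  note d = not_new_phase_data[OF nb]
  have S0: "{} \<in> ksubsets (stale0 t) 0" by (simp add: ksubsets_0 finite_stale)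
  have rC: "?r \<notin> ?C" using rM r0 rS by auto
  have "average (\<lambda>q. exp_cost k (insert ?r (?C - {q}), insert ?r (marked t), (pred t)(?r := p!t))
      (drop (Suc t) reqs)) (stale1 t - S1) \<le> pot (Suc t)"
  proof (rule average_le)
    fix x assume x: "x \<in> stale1 t - S1"
    have S1: "S1 \<subseteq> stale1 t" using inv unfolding evict_inv_def by simp
    then have fin: "finite (S1 - {?r})" using finite_stale(3) by (auto intro: finite_subset)
    have "evict_inv (Suc t) (insert x (S1 - {?r})) 0"
      by (rule evict_inv_Suc_fault[OF nb j rM r0 inv rS]) (use x rS fin S1 in auto)
    moreover have "config (Suc t) (insert x (S1 - {?r})) {}
        = (insert ?r (?C - {x}), insert ?r (marked t), (pred t)(?r := p!t))"
      unfolding config_def d using x rS stale_parts[of t] by auto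
    ultimately show "exp_cost k (insert ?r (?C - {x}), insert ?r (marked t), (pred t)(?r := p!t))
        (drop (Suc t) reqs) \<le> pot (Suc t)"
      using IH by (metis avg_cost_0)
  qed (use finite_stale pot_nonneg in auto)
  then show ?thesis
    using exp_cost_config_fault[OF t j inv S0 rM nb rC] ne by (simp add: avg_cost_0)
qed

lemma avg_cost_fault_stale0:
  assumes t: "t < nreq" and nb: "\<not> new_phase t" and j: "0 < cur t"
    and rM: "I!t \<notin> marked t" and r0: "I!t \<notin> stale0 t" and inv: "evict_inv t S1 h"
    and empty: "stale1 t - S1 = {}"
    and IH: "\<And>S1 h. evict_inv (Suc t) S1 h \<Longrightarrow> avg_cost (Suc t) S1 h \<le> pot (Suc t)"
  shows "avg_cost t S1 h \<le> 1 + pot (Suc t)"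
proof (cases "ksubsets (stale0 t) h = {}")
  case True
  then show ?thesis using pot_nonneg[of "Suc t"] by (simp add: avg_cost_def average_def)
next
  case False
  let ?r = "I!t"
  note d = not_new_phase_data[OF nb]
  obtain S0 where S0: "S0 \<in> ksubsets (stale0 t) h" using False by auto
  have "stale0 t - S0 \<noteq> {}" using config_full(2)[OF j inv S0 rM nb] empty by simp
  then have hu: "h < card (stale0 t)"
    using ksubsetsD[OF finite_stale(2) S0] by (metis Diff_eq_empty_iff card_seteq finite_stale(2) le_neq_implies_less card_mono)
  have step: "exp_cost k (config t S1 S) (drop t reqs)
      = 1 + average (\<lambda>x. exp_cost k (config (Suc t) (S1 - {?r}) (insert x S)) (drop (Suc t) reqs)) (stale0 t - S)"
    if S: "S \<in> ksubsets (stale0 t) h" for S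
  proof -
    have rC: "?r \<notin> marked t \<union> (stale1 t - S1) \<union> (stale0 t - S)" using rM r0 empty by auto
    have "config (Suc t) (S1 - {?r}) (insert q S)
        = (insert ?r (marked t \<union> (stale1 t - S1) \<union> (stale0 t - S) - {q}), insert ?r (marked t), (pred t)(?r := p!t))"
      if "q \<in> stale0 t - S" for q
      unfolding config_def d using that r0 empty stale_parts[of t] by auto
    then show ?thesis
      using exp_cost_config_fault[OF t j inv S rM nb rC] empty by (simp add: average_def)
  qed
  have "avg_cost t S1 h = 1 + average (\<lambda>S. average (\<lambda>x. exp_cost k (config (Suc t) (S1 - {?r}) (insert x S))
      (drop (Suc t) reqs)) (stale0 t - S)) (ksubsets (stale0 t) h)"
    unfolding avg_cost_def using False
    by (simp add: step average_add_const finite_ksubsets finite_stale cong: average_cong)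
  also have "\<dots> = 1 + avg_cost (Suc t) (S1 - {?r}) (Suc h)"
    using r0 average_ksubsets_insert[OF finite_stale(2) hu,
        of "\<lambda>S. exp_cost k (config (Suc t) (S1 - {?r}) S) (drop (Suc t) reqs)"]
    unfolding avg_cost_def d(6) by simp
  also have "avg_cost (Suc t) (S1 - {?r}) (Suc h) \<le> pot (Suc t)"
  proof (intro IH evict_inv_Suc_fault[OF nb j rM r0 inv])
    have "S1 = stale1 t" using inv empty unfolding evict_inv_def by auto
    then show "S1 - {?r} \<subseteq> stale1 t - {?r}" "0 < Suc h \<longrightarrow> S1 - {?r} = stale1 t - {?r}" by auto
  qed (use empty in auto)
  finally show ?thesis by simp
qed

lemma avg_cost_fault:
  assumes t: "t < nreq" and nb: "\<not> new_phase t" and j: "0 < cur t"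
    and rM: "I!t \<notin> marked t" and r0: "I!t \<notin> stale0 t" and inv: "evict_inv t S1 h"
    and rS: "I!t \<notin> stale1 t - S1"
    and IH: "\<And>S1 h. evict_inv (Suc t) S1 h \<Longrightarrow> avg_cost (Suc t) S1 h \<le> pot (Suc t)"
  shows "avg_cost t S1 h \<le> 1 + pot (Suc t)"
proof (cases "stale1 t - S1 = {}")
  case True
  then show ?thesis by (rule avg_cost_fault_stale0[OF t nb j rM r0 inv _ IH])
next
  case False
  then have "h = 0" using inv unfolding evict_inv_def by auto
  then show ?thesis using avg_cost_fault_stale1[OF t nb j rM r0 _ False rS IH] inv by simp
qed

lemma avg_cost_new_page:
  assumes t: "t < nreq" and nb: "\<not> new_phase t" and rM: "I!t \<notin> marked t" and rO: "I!t \<notin> old t"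
    and inv: "evict_inv t S1 h"
    and IH: "\<And>S1 h. evict_inv (Suc t) S1 h \<Longrightarrow> avg_cost (Suc t) S1 h \<le> pot (Suc t)"
  shows "avg_cost t S1 h \<le> pot t"
proof -
  note d = not_new_phase_data[OF nb]
  have r: "I!t \<notin> stale0 t" "I!t \<notin> stale1 t" using rO stale_parts[of t] by auto
  have "avg_cost t S1 h \<le> 1 + pot (Suc t)"
  proof (cases "cur t = 0")
    case True
    then have h0: "h = 0" "S1 = {}" and empty: "stale0 t = {}" "stale1 t = {}"
      using inv stale_first_phase[OF True] unfolding evict_inv_def by auto
    have "card (marked t) < k" using rM nb unfolding new_phase_def by simp
    then have "avg_cost t S1 h = 1 + avg_cost (Suc t) {} 0"
      unfolding h0 avg_cost_0 exp_cost_config[OF t] using rM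
      by (subst exp_cost_load) (auto simp: config_def d empty r)
    also have "avg_cost (Suc t) {} 0 \<le> pot (Suc t)"
      by (rule IH) (use True in \<open>simp add: evict_inv_def d\<close>)
    finally show ?thesis by simp
  qed (use avg_cost_fault[OF t nb _ rM r(1) inv _ IH] r in simp)
  also have "\<dots> = pot t" using pot_not_new_phase[OF t nb] rM rO r by simp
  finally show ?thesis .
qed

lemma avg_cost_stale1:
  assumes t: "t < nreq" and nb: "\<not> new_phase t" and r1: "I!t \<in> stale1 t" and inv: "evict_inv t S1 h"
    and IH: "\<And>S1 h. evict_inv (Suc t) S1 h \<Longrightarrow> avg_cost (Suc t) S1 h \<le> pot (Suc t)"
  shows "avg_cost t S1 h \<le> pot t"
proof -
  let ?r = "I!t"
  note d = not_new_phase_data[OF nb]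
  have rM: "?r \<notin> marked t" and rO: "?r \<in> old t" and r0: "?r \<notin> stale0 t" and j: "0 < cur t"
    using r1 stale_parts[of t] cur_pos_stale[of ?r t] by (auto simp: stale_iff)
  have "avg_cost t S1 h \<le> 1 + pot (Suc t)"
  proof (cases "?r \<in> S1")
    case False
    then have h0: "h = 0" using inv r1 unfolding evict_inv_def by auto
    have "insert ?r (marked t \<union> (stale1 t - {?r} - S1) \<union> (stale0 t - {?r}))
        = marked t \<union> (stale1 t - S1) \<union> stale0 t"
      using False r1 r0 by auto
    then have "avg_cost t S1 h = avg_cost (Suc t) S1 0"
      unfolding h0 avg_cost_0 exp_cost_config[OF t] using False r1
      by (subst exp_cost_hit) (auto simp: config_def d)
    also have "\<dots> \<le> pot (Suc t)"
    proof (rule IH)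
      have "insert ?r (marked t) - old t = marked t - old t" using rO by auto
      then show "evict_inv (Suc t) S1 0" using inv False h0 j unfolding evict_inv_def d by auto
    qed
    finally show ?thesis by simp
  qed (use avg_cost_fault[OF t nb j rM r0 inv _ IH] in simp)
  also have "\<dots> = pot t" using pot_not_new_phase[OF t nb] rM rO r1 r0 by simp
  finally show ?thesis .
qed

lemma exp_cost_config_stale0:
  assumes t: "t < nreq" and nb: "\<not> new_phase t" and r0: "I!t \<in> stale0 t" and inv: "evict_inv t S1 h"
    and S: "S \<in> ksubsets (stale0 t) h"
  defines "g \<equiv> \<lambda>S. exp_cost k (config (Suc t) S1 S) (drop (Suc t) reqs)"
  shows "exp_cost k (config t S1 S) (drop t reqs)
    = (if I!t \<in> S then 1 + average (\<lambda>x. g (insert x (S - {I!t}))) (stale0 t - S) else g S)"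
proof -
  let ?r = "I!t"
  note d = not_new_phase_data[OF nb]
  have rM: "?r \<notin> marked t" and r1: "?r \<notin> stale1 t" and j: "0 < cur t"
    using r0 stale_parts[of t] cur_pos_stale[of ?r t] by (auto simp: stale_iff)
  show ?thesis
  proof (cases "?r \<in> S")
    case False
    then have rC: "?r \<in> marked t \<union> (stale1 t - S1) \<union> (stale0 t - S)" using r0 by auto
    then have "config (Suc t) S1 S = (marked t \<union> (stale1 t - S1) \<union> (stale0 t - S), insert ?r (marked t), (pred t)(?r := p!t))"
      unfolding config_def d using False r1 by auto
    then show ?thesis unfolding exp_cost_config[OF t] g_def using False exp_cost_hit[OF rC] by simp
  next
    case True
    then have "0 < h" using ksubsetsD[OF finite_stale(2) S] by (auto simp: card_gt_0_iff)
    then have empty: "stale1 t - S1 = {}" using inv unfolding evict_inv_def by auto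
    have rC: "?r \<notin> marked t \<union> (stale1 t - S1) \<union> (stale0 t - S)" using rM r1 True by auto
    have "config (Suc t) S1 (insert q (S - {?r}))
        = (insert ?r (marked t \<union> (stale1 t - S1) \<union> (stale0 t - S) - {q}), insert ?r (marked t), (pred t)(?r := p!t))"
      if "q \<in> stale0 t - S" for q
      unfolding config_def d using that empty True r1 stale_parts[of t] by auto
    then show ?thesis
      using exp_cost_config_fault[OF t j inv S rM nb rC] empty True by (simp add: g_def average_def)
  qed
qed

text \<open>A request to a stale 0-page faults only if the page is among the \<open>h\<close> evicted ones, i.e. with
  probability \<open>h / card (stale0 t)\<close>; the eviction that follows puts a uniformly random cached
  stale 0-page into the evicted set in its place, which keeps the evicted set uniform.\<close>

lemma avg_cost_stale0:
  assumes t: "t < nreq" and nb: "\<not> new_phase t" and r0: "I!t \<in> stale0 t" and inv: "evict_inv t S1 h"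
    and IH: "\<And>S1 h. evict_inv (Suc t) S1 h \<Longrightarrow> avg_cost (Suc t) S1 h \<le> pot (Suc t)"
  shows "avg_cost t S1 h \<le> pot t"
proof -
  let ?r = "I!t"
  note d = not_new_phase_data[OF nb]
  have rM: "?r \<notin> marked t" and rO: "?r \<in> old t" and r1: "?r \<notin> stale1 t" and j: "0 < cur t"
    using r0 stale_parts[of t] cur_pos_stale[of ?r t] by (auto simp: stale_iff)
  have "pending_err0 t < card (stale0 t)"
    unfolding pending_err0_def using r0 pending_self[OF t nb] finite_stale(2)
    by (intro psubset_card_mono) auto
  moreover have h_le: "h \<le> pending_err0 t"
    using h_le_pending_err0[OF less_imp_le[OF t] inv] by (cases "h = 0") auto
  ultimately have hu: "h < card (stale0 t)" by simp
  define g where "g S = exp_cost k (config (Suc t) S1 S) (drop (Suc t) reqs)" for S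
  have "avg_cost t S1 h = real h / real (card (stale0 t)) + average g (ksubsets (stale0 t - {?r}) h)"
    unfolding avg_cost_def using average_ksubsets_remove[OF finite_stale(2) r0 hu, of g]
    by (simp add: exp_cost_config_stale0[OF t nb r0 inv, folded g_def] cong: average_cong)
  also have "average g (ksubsets (stale0 t - {?r}) h) = avg_cost (Suc t) S1 h"
    unfolding avg_cost_def d g_def ..
  also have "avg_cost (Suc t) S1 h \<le> pot (Suc t)"
  proof (rule IH)
    have "insert ?r (marked t) - old t = marked t - old t" using rO by auto
    then show "evict_inv (Suc t) S1 h" using inv j r1 unfolding evict_inv_def d by auto
  qed
  also have "real h / real (card (stale0 t)) \<le> real (pending_err0 t) / real (card (stale0 t))"
    using h_le by (simp add: divide_right_mono)
  finally show ?thesis using pot_not_new_phase[OF t nb] rM rO r1 r0 by simp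
qed

lemma avg_cost_le_pot: "t \<le> nreq \<Longrightarrow> evict_inv t S1 h \<Longrightarrow> avg_cost t S1 h \<le> pot t"
proof (induction "nreq - t" arbitrary: t S1 h)
  case 0
  then have "drop t reqs = []" unfolding reqs_def using length_p by simp
  then show ?case unfolding avg_cost_def using pot_nonneg by (simp add: exp_cost_Nil average_def)
next
  case (Suc m)
  then have t: "t < nreq" by simp
  have IH: "\<And>S1 h. evict_inv (Suc t) S1 h \<Longrightarrow> avg_cost (Suc t) S1 h \<le> pot (Suc t)"
    using Suc by simp
  consider "new_phase t" | "\<not> new_phase t" "I!t \<in> marked t" | "\<not> new_phase t" "I!t \<notin> marked t" "I!t \<notin> old t"
    | "\<not> new_phase t" "I!t \<in> stale1 t" | "\<not> new_phase t" "I!t \<in> stale0 t"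
    by (auto simp: stale_iff)
  then show ?case
  proof cases
    case 1 then show ?thesis using avg_cost_new_phase[OF t _ Suc.prems(2) IH] by simp
  next
    case 2 then show ?thesis using avg_cost_marked[OF t _ Suc.prems(2) IH] by simp
  next
    case 3 then show ?thesis using avg_cost_new_page[OF t _ _ _ Suc.prems(2) IH] by simp
  next
    case 4 then show ?thesis using avg_cost_stale1[OF t _ _ Suc.prems(2) IH] by simp
  next
    case 5 then show ?thesis using avg_cost_stale0[OF t _ _ Suc.prems(2) IH] by simp
  qed
qed

lemma mp_cost_le_new_from:
  "mp_cost k I p \<le> real (new_from 0) + real (eta k I p True) + harm k * real (eta k I p False)"
proof -
  have empty: "stale0 0 = {}" "stale1 0 = {}" using stale_first_phase skel_0 by auto
  have "evict_inv 0 {} 0" unfolding evict_inv_def using empty skel_0 by simp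
  then have "avg_cost 0 {} 0 \<le> pot 0" by (intro avg_cost_le_pot) auto
  moreover have "avg_cost 0 {} 0 = mp_cost k I p"
    unfolding avg_cost_0 config_def mp_cost_def exp_cost_def reqs_def using empty skel_0 by simp
  moreover have "err_from h 0 = eta k I p h" for h
    unfolding err_from_def eta_def skel_0 by simp
  moreover have "pending_err1 0 = 0" "pending_err0 0 = 0"
    unfolding pending_err1_def pending_err0_def using empty by simp_all
  ultimately show ?thesis unfolding pot_def by simp
qed

section \<open>New pages and OPT\<close>

lemma not_new_phase_0: "\<not> new_phase 0" using k_pos unfolding new_phase_def by (simp add: skel_0)

lemma ph_0: "0 < nreq \<Longrightarrow> ph 0 = 0"
  using ph_eq_cur_Suc[of 0] not_new_phase_0 by (simp add: skel_Suc skel_0)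

lemma ph_Suc_le: "Suc i < nreq \<Longrightarrow> ph (Suc i) \<le> Suc (ph i)"
  using ph_eq_cur_Suc[of "Suc i"] ph_eq_cur_Suc[of i] cur_Suc(2)[of "Suc i"] by simp

definition new_in :: "nat \<Rightarrow> nat set" where
  "new_in j = {i. i < nreq \<and> is_new i \<and> ph i = j}"

lemma new_in_pages_distinct:
  assumes a: "a \<in> new_in j" and c: "c \<in> new_in j" and ac: "a < c"
  shows "I!a \<noteq> I!c"
proof -
  have "c < nreq" "ph a = j" "ph c = j" using a c unfolding new_in_def by auto
  moreover from this have "ph (c - 1) = j" using ph_mono[of a "c - 1"] ph_mono[of "c - 1" c] ac by simp
  ultimately have "cur c = j" using ph_eq_cur_Suc[of "c - 1"] ac by simp
  then have "I!a \<in> marked c" using marked_eq[of c] ac \<open>ph a = j\<close> \<open>c < nreq\<close> by auto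
  then show ?thesis using c unfolding new_in_def is_new_def by auto
qed

lemma inj_on_new_in: "inj_on (\<lambda>i. I!i) (new_in j)"
  by (rule inj_onI) (metis new_in_pages_distinct linorder_neqE_nat)

lemma card_new_in_0: "card (new_in 0) \<le> k"
proof -
  have "card (new_in 0) = card ((\<lambda>i. I!i) ` new_in 0)" using card_image[OF inj_on_new_in] by simp
  also have "\<dots> \<le> card (marked 0 \<union> {q. pending 0 q})"
  proof (rule card_mono)
    have "{q. pending 0 q} \<subseteq> set I" unfolding pending_def by auto
    then show "finite (marked 0 \<union> {q. pending 0 q})" using finite_marked by (auto intro: finite_subset)
    show "(\<lambda>i. I!i) ` new_in 0 \<subseteq> marked 0 \<union> {q. pending 0 q}" unfolding new_in_def pending_def skel_0 by auto
  qed
  also have "\<dots> \<le> k" using card_marked_pending_le[of 0] by simp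
  finally show ?thesis .
qed

lemma first_request_of_phase:
  assumes b: "b < nreq" "ph b = j" and j: "1 \<le> j" and first: "\<And>i. i < nreq \<Longrightarrow> ph i = j \<Longrightarrow> b \<le> i"
  shows "cur b = j - 1" "new_phase b"
proof -
  have b0: "0 < b" using b ph_0 j by (cases b) auto
  have "b - 1 < nreq" "\<not> b \<le> b - 1" using b b0 by auto
  then have "ph (b - 1) \<le> j" "ph (b - 1) \<noteq> j" "j \<le> Suc (ph (b - 1))"
    using ph_mono[of "b - 1" b] first[of "b - 1"] ph_Suc_le[of "b - 1"] b b0 by auto
  then have "ph (b - 1) = j - 1" by simp
  then show cur: "cur b = j - 1" using ph_eq_cur_Suc[of "b - 1"] b b0 by simp
  show "new_phase b"
  proof (rule ccontr)
    assume "\<not> new_phase b"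
    then show False using ph_eq_cur_Suc[of b] b cur j by (simp add: skel_Suc)
  qed
qed

lemma ph_less_imp_less: "ph i < ph i' \<Longrightarrow> i < nreq \<Longrightarrow> i < i'"
  using ph_mono[of i' i] by (cases "i' \<le> i") auto

definition phase_pages :: "nat \<Rightarrow> 'a set" where
  "phase_pages j = {I!i | i. i < nreq \<and> ph i = j}"

lemma card_phase_pages_prev:
  assumes i0: "i0 < nreq" "ph i0 = j" and j: "1 \<le> j"
  shows "card (phase_pages (j - 1)) = k"
proof -
  define b where "b = (LEAST i. i < nreq \<and> ph i = j)"
  have b: "b < nreq" "ph b = j" unfolding b_def using LeastI[of "\<lambda>i. i < nreq \<and> ph i = j" i0] i0 by auto
  have "\<And>i. i < nreq \<Longrightarrow> ph i = j \<Longrightarrow> b \<le> i" unfolding b_def by (simp add: Least_le)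
  note start = first_request_of_phase[OF b j this]
  have "phase_pages (j - 1) = {I!i | i. i < b \<and> ph i = j - 1}"
    unfolding phase_pages_def using b j ph_less_imp_less[of _ b] by fastforce
  then show ?thesis using marked_eq[of b] b start(1) new_phase_data(8)[OF start(2)] by simp
qed

lemma new_in_not_prev_phase:
  assumes i: "i \<in> new_in j" and i': "i' < i" "ph i' = j - 1" and j: "1 \<le> j"
  shows "I!i \<noteq> I!i'"
proof -
  have "i < nreq" "is_new i" "ph i = j" using i unfolding new_in_def by auto
  then have "I!i' \<in> old (Suc i)" using old_eq[of "Suc i"] ph_eq_cur_Suc[of i] i' j by auto
  then show ?thesis using \<open>is_new i\<close> unfolding is_new_def by auto
qed

text \<open>OPT faults at least \<open>|new_in j|\<close> times in phases \<open>j - 1\<close> and \<open>j\<close> together: right after the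
  first request of phase \<open>j - 1\<close> its cache holds that page and at most \<open>k - 1\<close> others, while the
  other \<open>k - 1\<close> pages of phase \<open>j - 1\<close> and the new pages of phase \<open>j\<close> are all requested later on.\<close>

lemma card_new_in_le_faults:
  assumes v: "valid_schedule k I Cs" and j: "1 \<le> j"
  shows "card (new_in j) \<le> card {i. i < nreq \<and> I!i \<notin> Cs!i \<and> (ph i = j - 1 \<or> ph i = j)}"
proof (cases "new_in j = {}")
  case False
  then obtain i0 where "i0 \<in> new_in j" by auto
  then have i0: "i0 < nreq" "ph i0 = j" unfolding new_in_def by auto
  let ?P = "phase_pages (j - 1)" and ?N = "(\<lambda>i. I!i) ` new_in j"
  have card_P: "card ?P = k" by (rule card_phase_pages_prev[OF i0 j])
  then have "?P \<noteq> {}" using k_pos by auto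
  then obtain i1 where "i1 < nreq" "ph i1 = j - 1" unfolding phase_pages_def by blast
  define f where "f = (LEAST i. i < nreq \<and> ph i = j - 1)"
  have f: "f < nreq" "ph f = j - 1" unfolding f_def
    using LeastI[of "\<lambda>i. i < nreq \<and> ph i = j - 1" i1] \<open>i1 < nreq\<close> \<open>ph i1 = j - 1\<close> by auto
  have f_least: "\<And>i. i < nreq \<Longrightarrow> ph i = j - 1 \<Longrightarrow> f \<le> i" unfolding f_def by (simp add: Least_le)
  have after_prev: "i' < i" if "i \<in> new_in j" "i' < nreq" "ph i' = j - 1" for i i'
    using that j ph_less_imp_less[of i' i] by (auto simp: new_in_def)
  let ?T = "(?P - {I!f}) \<union> ?N" and ?C = "Cs!Suc f"
  have "I!i \<noteq> I!i'" if "i \<in> new_in j" "i' < nreq" "ph i' = j - 1" for i i'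
    using new_in_not_prev_phase[OF that(1) after_prev[OF that] that(3) j] .
  then have disj: "?N \<inter> ?P = {}" unfolding phase_pages_def by blast
  have "I!f \<in> ?P" using f unfolding phase_pages_def by auto
  moreover have "finite ?P" unfolding phase_pages_def by simp
  ultimately have "card ?T = (k - 1) + card (new_in j)"
    using disj card_P card_image[OF inj_on_new_in] by (subst card_Un_disjoint) (auto simp: new_in_def)
  moreover have "card (?C - {I!f}) \<le> k - 1" "finite ?C"
    using schedule_finite_card[OF v, of "Suc f"] request_in_schedule[OF v f(1)] f by auto
  moreover have "?T - (?C - {I!f}) = ?T - ?C" using disj \<open>I!f \<in> ?P\<close> by auto
  ultimately have "card (new_in j) \<le> card (?T - ?C)"
    using diff_card_le_card_Diff[of "?C - {I!f}" ?T] by simp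
  also have "\<dots> \<le> card {i. Suc f \<le> i \<and> i < nreq \<and> ph i \<le> j \<and> I!i \<notin> Cs!i}"
  proof (rule card_le_schedule_faults[OF v])
    fix q assume q: "q \<in> ?T - ?C"
    show "\<exists>i. Suc f \<le> i \<and> i < nreq \<and> ph i \<le> j \<and> I!i = q"
    proof (cases "q \<in> ?N")
      case True
      then obtain i where "i \<in> new_in j" "q = I!i" by auto
      then show ?thesis using after_prev[OF _ f(1,2)] by (intro exI[of _ i]) (auto simp: new_in_def Suc_le_eq)
    next
      case False
      then obtain i where i: "i < nreq" "ph i = j - 1" "q = I!i" "q \<noteq> I!f"
        using q unfolding phase_pages_def by auto
      then have "f < i" using f_least[of i] by (cases "i = f") auto
      then show ?thesis using i by (intro exI[of _ i]) auto
    qed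
  qed (blast, meson ph_mono order.trans)
  also have "\<dots> \<le> card {i. i < nreq \<and> I!i \<notin> Cs!i \<and> (ph i = j - 1 \<or> ph i = j)}"
  proof (intro card_mono subsetI)
    fix i assume "i \<in> {i. Suc f \<le> i \<and> i < nreq \<and> ph i \<le> j \<and> I!i \<notin> Cs!i}"
    moreover from this have "j - 1 \<le> ph i" using ph_mono[of f i] f(2) by simp
    ultimately show "i \<in> {i. i < nreq \<and> I!i \<notin> Cs!i \<and> (ph i = j - 1 \<or> ph i = j)}" by auto
  qed simp
  finally show ?thesis .
qed simp

lemma new_from_0_split: "new_from 0 = card (new_in 0) + (\<Sum>j\<in>{1..ph (nreq - 1)}. card (new_in j))"
proof -
  let ?J = "ph (nreq - 1)"
  have U: "{i. 0 \<le> i \<and> i < nreq \<and> is_new i} = (\<Union>j\<in>{0..?J}. new_in j)"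
  proof
    show "{i. 0 \<le> i \<and> i < nreq \<and> is_new i} \<subseteq> (\<Union>j\<in>{0..?J}. new_in j)"
    proof
      fix i assume "i \<in> {i. 0 \<le> i \<and> i < nreq \<and> is_new i}"
      then have i: "i < nreq" "is_new i" by auto
      then have "ph i \<le> ?J" using ph_mono[of i "nreq - 1"] by simp
      then show "i \<in> (\<Union>j\<in>{0..?J}. new_in j)" using i unfolding new_in_def by auto
    qed
    show "(\<Union>j\<in>{0..?J}. new_in j) \<subseteq> {i. 0 \<le> i \<and> i < nreq \<and> is_new i}" unfolding new_in_def by auto
  qed
  have "new_from 0 = card (\<Union>j\<in>{0..?J}. new_in j)" unfolding new_from_def U ..
  also have "\<dots> = (\<Sum>j\<in>{0..?J}. card (new_in j))"
    by (rule card_UN_disjoint) (auto simp: new_in_def)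
  also have "\<dots> = card (new_in 0) + (\<Sum>j\<in>{1..?J}. card (new_in j))"
    by (simp add: sum.atLeast_Suc_atMost)
  finally show ?thesis .
qed

lemma new_from_0_le_schedule_cost: "valid_schedule k I Cs \<Longrightarrow> new_from 0 \<le> k + 2 * schedule_cost I Cs"
proof -
  assume v: "valid_schedule k I Cs"
  let ?F = "{i. i < nreq \<and> I!i \<notin> Cs!i}"
  let ?J = "ph (nreq - 1)"
  have "(\<Sum>j\<in>{1..?J}. card (new_in j)) \<le> (\<Sum>j\<in>{1..?J}. card {i \<in> ?F. ph i = j - 1 \<or> ph i = j})"
  proof (rule sum_mono)
    fix j assume "j \<in> {1..?J}"
    then have "1 \<le> j" by simp
    then have "card (new_in j) \<le> card {i. i < nreq \<and> I!i \<notin> Cs!i \<and> (ph i = j - 1 \<or> ph i = j)}"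
      by (rule card_new_in_le_faults[OF v])
    moreover have "{i. i < nreq \<and> I!i \<notin> Cs!i \<and> (ph i = j - 1 \<or> ph i = j)} = {i \<in> ?F. ph i = j - 1 \<or> ph i = j}"
      by auto
    ultimately show "card (new_in j) \<le> card {i \<in> ?F. ph i = j - 1 \<or> ph i = j}" by simp
  qed
  also have "\<dots> \<le> 2 * card ?F" by (rule sum_card_adjacent_le) simp
  finally have "(\<Sum>j\<in>{1..?J}. card (new_in j)) \<le> 2 * schedule_cost I Cs" unfolding schedule_cost_def .
  then show ?thesis using new_from_0_split card_new_in_0 by simp
qed

lemma new_from_0_le_OPT: "new_from 0 \<le> k + 2 * OPT k I"
  using OPT_attained[OF k_pos] new_from_0_le_schedule_cost by metis

lemma mp_cost_bound:
  "mp_cost k I p \<le> 2 * real (OPT k I) + harm k * real (eta k I p False) + real (eta k I p True) + real k"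
proof -
  have "real (new_from 0) \<le> real k + 2 * real (OPT k I)"
    using new_from_0_le_OPT by (metis of_nat_add of_nat_le_iff of_nat_mult of_nat_numeral)
  then show ?thesis using mp_cost_le_new_from by simp
qed

end

theorem theorem3:
  fixes k :: nat
  assumes "k \<ge> 1"
  shows "\<exists>b::real. \<forall>(I :: 'a list) (p :: bool list). length p = length I \<longrightarrow>
           mp_cost k I p \<le> 2 * real (OPT k I) + (\<Sum>j=1..k. 1 / real j) * real (eta k I p False)
                            + real (eta k I p True) + b"
proof (intro exI[of _ "real k"] allI impI)
  fix I :: "'a list" and p :: "bool list"
  assume "length p = length I"
  then interpret mark_predict_run k I p using assms by unfold_locales
  have "harm k = (\<Sum>j=1..k. 1 / real j)"
    unfolding harm_def by (simp add: inverse_eq_divide)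
  then show "mp_cost k I p \<le> 2 * real (OPT k I) + (\<Sum>j=1..k. 1 / real j) * real (eta k I p False)
      + real (eta k I p True) + real k"
    using mp_cost_bound by simp
qed

end
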